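(* Let $\mathcal{H}$ be a finite-dimensional Hilbert space, $H_0$ a Hermitian operator with ground energy $E_0$, ground-space projection $P_0$ and $Q_0=I-P_0$, and $V$ a Hermitian operator. Let $G=Q_0(E_0I-H_0)^{-1}Q_0$ (inverse taken on the range of $Q_0$). Let $L\geq 2$ be an integer such that for every $n<L$ and all choices $Z_1,\dots,Z_{n-1}\in\{P_0,Q_0\}\cup\{G^m: m\in\mathbb{N}\}$, one has $P_0VZ_1VZ_2\cdots Z_{n-1}VP_0\in\mathbb{C}P_0$ (equivalently, $P_0\Gamma(n)P_0\subseteq\mathbb{C}P_0$ for all $n<L$, with $\Gamma(n)$ as in the context). Then the Schrieffer–Wolff effective Hamiltonian coefficients satisfy $H_{\mathrm{eff},1}=P_0VP_0\in\mathbb{C}P_0$ and $H_{\mathrm{eff},q}\in\mathbb{C}P_0$ for all $2\le q<L$ (so the effective Hamiltonian $H_{\mathrm{eff}}^{(n)}=E_0P_0+\sum_{q=1}^n\epsilon^qH_{\mathrm{eff},q}$ is proportional to $P_0$ for all $n<L$), and $$H_{\mathrm{eff},L}\in P_0(VG)^{L-1}VP_0+\mathbb{C}P_0,$$ where $(VG)^{L-1}V$ contains $L$ factors of $V$.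
   Context: Notation. $\Gamma(n)$ is the linear span of operators $Z_0VZ_1V\cdots Z_{n-1}VZ_n$ with each $Z_j\in\{P_0,Q_0\}\cup\{G^m:m\in\mathbb{N}\}$. Set $V_{\mathrm d}=P_0VP_0+Q_0VQ_0$, $V_{\mathrm{od}}=P_0VQ_0+Q_0VP_0$, $\mathcal{L}(X)=P_0XG-GXP_0$, $\mathrm{ad}_S(X)=[S,X]$. Let $\beta_m$ be the Bernoulli numbers ($\beta_2=1/6$), $a_m=2^m\beta_m/m!$, and $b_{2n-1}=2(2^{2n}-1)\beta_{2n}/(2n)!$ (so $b_1=1/2$). Define recursively $S_1=\mathcal{L}(V_{\mathrm{od}})$, $S_2=-\mathcal{L}(\mathrm{ad}_{V_{\mathrm d}}(S_1))$, and for $n\ge 3$, $S_n=-\mathcal{L}(\mathrm{ad}_{V_{\mathrm d}}(S_{n-1}))+\sum_{j\ge1}a_{2j}\mathcal{L}(\hat S^{2j}(V_{\mathrm{od}})_{n-1})$, where $\hat S^k(V_{\mathrm{od}})_m=\sum_{n_1,\dots,n_k\ge1,\ \sum_r n_r=m}\mathrm{ad}_{S_{n_1}}\cdots\mathrm{ad}_{S_{n_k}}(V_{\mathrm{od}})$ (which is $0$ if $k>m$). The Schrieffer–Wolff effective Hamiltonian expansion is $H_{\mathrm{eff}}^{(n)}=H_0P_0+\epsilon P_0VP_0+\sum_{q=2}^n\epsilon^qH_{\mathrm{eff},q}$ with $H_{\mathrm{eff},1}=P_0VP_0$ and $H_{\mathrm{eff},q}=\sum_{1\le j\le\lfloor q/2\rfloor}b_{2j-1}P_0\hat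 S^{2j-1}(V_{\mathrm{od}})_{q-1}P_0$ for $q\ge2$. *)

theory Defs
  imports "Jordan_Normal_Form.Schur_Decomposition" "Jordan_Normal_Form.Char_Poly"
begin

definition hermitian_mat :: "complex mat \<Rightarrow> bool" where
  "hermitian_mat A \<longleftrightarrow> A \<in> carrier_mat (dim_row A) (dim_row A) \<and> mat_adjoint A = A"

definition ground_energy :: "complex mat \<Rightarrow> real" where
  "ground_energy H = (THE E. eigenvalue H (complex_of_real E) \<and> (\<forall>k. eigenvalue H k \<longrightarrow> E \<le> Re k))"

definition ground_proj :: "complex mat \<Rightarrow> complex mat" where
  "ground_proj H = (THE P. P \<in> carrier_mat (dim_row H) (dim_row H) \<and> P * P = P \<and> mat_adjoint P = P \<and>
     (\<forall>v \<in> carrier_vec (dim_row H).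
        P *\<^sub>v v = v \<longleftrightarrow> H *\<^sub>v v = complex_of_real (ground_energy H) \<cdot>\<^sub>v v))"

definition compl_proj :: "complex mat \<Rightarrow> complex mat" where
  "compl_proj H = 1\<^sub>m (dim_row H) - ground_proj H"

text \<open>Reduced resolvent G = Q0 (E0 I - H0)^{-1} Q0, the inverse being taken on range Q0
  (G vanishes on range P0).\<close>
definition reduced_resolvent :: "complex mat \<Rightarrow> complex mat" where
  "reduced_resolvent H = (THE G. G \<in> carrier_mat (dim_row H) (dim_row H) \<and>
     G * ground_proj H = 0\<^sub>m (dim_row H) (dim_row H) \<and>
     ground_proj H * G = 0\<^sub>m (dim_row H) (dim_row H) \<and>
     G * (complex_of_real (ground_energy H) \<cdot>\<^sub>m 1\<^sub>m (dim_row H) - H) = compl_proj H)"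

section \<open>Bernoulli numbers (convention B_1 = -1/2, B_2 = 1/6)\<close>

fun bernoulli :: "nat \<Rightarrow> real" where
  "bernoulli n = (if n = 0 then 1
     else - (\<Sum>k<n. real ((n + 1) choose k) * bernoulli k) / real (n + 1))"

definition sw_a :: "nat \<Rightarrow> real" where
  "sw_a m = 2 ^ m * bernoulli m / fact m"

text \<open>sw_b n is b_{2n-1} = 2 (2^{2n} - 1) B_{2n} / (2n)!\<close>
definition sw_b :: "nat \<Rightarrow> real" where
  "sw_b n = 2 * (2 ^ (2 * n) - 1) * bernoulli (2 * n) / fact (2 * n)"

definition msum :: "nat \<Rightarrow> (nat \<Rightarrow> complex mat) \<Rightarrow> nat list \<Rightarrow> complex mat" where
  "msum d f xs = foldr (\<lambda>i acc. f i + acc) xs (0\<^sub>m d d)"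

definition ad :: "complex mat \<Rightarrow> complex mat \<Rightarrow> complex mat" where
  "ad S X = S * X - X * S"

definition Lop :: "complex mat \<Rightarrow> complex mat \<Rightarrow> complex mat \<Rightarrow> complex mat" where
  "Lop P G X = P * X * G - G * X * P"

text \<open>hatS d S W k m = sum over n_1,...,n_k >= 1 with n_1+...+n_k = m of
  ad_{S n_1} ... ad_{S n_k} W.\<close>
fun hatS :: "nat \<Rightarrow> (nat \<Rightarrow> complex mat) \<Rightarrow> complex mat \<Rightarrow> nat \<Rightarrow> nat \<Rightarrow> complex mat" where
  "hatS d S W 0 m = (if m = 0 then W else 0\<^sub>m d d)"
| "hatS d S W (Suc k) m = msum d (\<lambda>n1. ad (S n1) (hatS d S W k (m - n1))) [1..<m+1]"

definition V_diag :: "complex mat \<Rightarrow> complex mat \<Rightarrow> complex mat" where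
  "V_diag H V = ground_proj H * V * ground_proj H + compl_proj H * V * compl_proj H"

definition V_offdiag :: "complex mat \<Rightarrow> complex mat \<Rightarrow> complex mat" where
  "V_offdiag H V = ground_proj H * V * compl_proj H + compl_proj H * V * ground_proj H"

text \<open>For n = 2 the Bernoulli sum
  vanishes identically (hatS^{2j}(V_od)_1 = 0), so one formula covers n >= 2.
  The sum over j >= 1 is restricted to 2j <= n-1, since hatS^k(V_od)_m = 0 for k > m.\<close>
definition S_next :: "complex mat \<Rightarrow> complex mat \<Rightarrow> (nat \<Rightarrow> complex mat) \<Rightarrow> nat \<Rightarrow> complex mat" where
  "S_next H V S n =
    (let d = dim_row H; P = ground_proj H; G = reduced_resolvent H;
         Vd = V_diag H V; Vod = V_offdiag H V in
     if n = 1 then Lop P G Vod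
     else - Lop P G (ad Vd (S (n - 1)))
          + msum d (\<lambda>j. complex_of_real (sw_a (2 * j)) \<cdot>\<^sub>m Lop P G (hatS d S Vod (2 * j) (n - 1)))
              [1..<(n - 1) div 2 + 1])"

text \<open>List [S_0 (dummy), S_1, ..., S_n].\<close>
primrec S_list :: "complex mat \<Rightarrow> complex mat \<Rightarrow> nat \<Rightarrow> complex mat list" where
  "S_list H V 0 = [0\<^sub>m (dim_row H) (dim_row H)]"
| "S_list H V (Suc n) = S_list H V n @ [S_next H V (\<lambda>i. S_list H V n ! i) (Suc n)]"

definition SW_S :: "complex mat \<Rightarrow> complex mat \<Rightarrow> nat \<Rightarrow> complex mat" where
  "SW_S H V n = S_list H V n ! n"

definition H_eff :: "complex mat \<Rightarrow> complex mat \<Rightarrow> nat \<Rightarrow> complex mat" where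
  "H_eff H V q =
    (if q = 1 then ground_proj H * V * ground_proj H
     else msum (dim_row H)
       (\<lambda>j. complex_of_real (sw_b j) \<cdot>\<^sub>m
            (ground_proj H * hatS (dim_row H) (SW_S H V) (V_offdiag H V) (2 * j - 1) (q - 1) * ground_proj H))
       [1..<q div 2 + 1])"

definition in_span_P :: "complex mat \<Rightarrow> complex mat \<Rightarrow> bool" where
  "in_span_P P X \<longleftrightarrow> (\<exists>c. X = c \<cdot>\<^sub>m P)"

definition V_chain :: "complex mat \<Rightarrow> complex mat \<Rightarrow> complex mat list \<Rightarrow> complex mat" where
  "V_chain P V Zs = foldl (\<lambda>acc Z. acc * Z * V) (P * V) Zs * P"

definition Z_choices :: "complex mat \<Rightarrow> complex mat set" where
  "Z_choices H = {ground_proj H, compl_proj H} \<union> {reduced_resolvent H ^\<^sub>m m | m. True}"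

end

theory Submission
  imports Defs "Jordan_Normal_Form.Matrix_Kernel"
begin

(*
  Call a product Z0 V Z1 V ... V Zn with letters Zi in {P0} \<union> {G^m} a word of degree n, and call
  it split if one of its interior letters is P0. Modulo split words of degree n,
  S_n = P0 (VG)^n - (GV)^n P0: the P0 V P0 part of V_d and all Bernoulli terms only produce split
  words. Hence every nested commutator hatS^k(V_od) with k >= 2 is split, and H_eff,q equals
  1/2 P0 [S_(q-1), V_od] P0 = P0 (VG)^(q-1) V P0 up to split words. Finally, if A P0 B is a split
  word of degree at most L, then P0 (A P0 B) P0 = (P0 A P0) (P0 B P0) is a product of two chains of
  degree less than L, hence a multiple of P0 by hypothesis; so is the leading chain when q < L.
*)

section \<open>Linear spans of square matrices\<close>

inductive_set mat_span :: "nat \<Rightarrow> 'a :: comm_ring_1 mat set \<Rightarrow> 'a mat set" for n S where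
  mat_span_zero: "0\<^sub>m n n \<in> mat_span n S"
| mat_span_base: "x \<in> S \<Longrightarrow> x \<in> mat_span n S"
| mat_span_add: "x \<in> mat_span n S \<Longrightarrow> y \<in> mat_span n S \<Longrightarrow> x + y \<in> mat_span n S"
| mat_span_smult: "x \<in> mat_span n S \<Longrightarrow> c \<cdot>\<^sub>m x \<in> mat_span n S"

lemma mat_span_carrier:
  assumes "S \<subseteq> carrier_mat n n" "x \<in> mat_span n S" shows "x \<in> carrier_mat n n"
  using assms(2) by (induction rule: mat_span.induct) (use assms(1) in auto)

lemma mat_span_diff:
  assumes "S \<subseteq> carrier_mat n n" "x \<in> mat_span n S" "y \<in> mat_span n S"
  shows "x - y \<in> mat_span n S"
proof -
  have "x - y = x + (-1) \<cdot>\<^sub>m y"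
    using mat_span_carrier[OF assms(1,2)] mat_span_carrier[OF assms(1,3)] by (intro eq_matI) auto
  then show ?thesis using assms(2,3) by (simp add: mat_span_smult mat_span_add)
qed

lemma mat_span_subset:
  assumes "S \<subseteq> mat_span n T" "x \<in> mat_span n S" shows "x \<in> mat_span n T"
  using assms(2) by (induction rule: mat_span.induct) (use assms(1) in \<open>auto intro: mat_span.intros\<close>)

lemma mat_span_span: "mat_span n (mat_span n S) = mat_span n S"
  using mat_span_subset[of "mat_span n S" n S] mat_span_base by blast

lemma mat_span_linear_image:
  assumes S: "S \<subseteq> carrier_mat n n"
    and add: "\<And>x y. x \<in> carrier_mat n n \<Longrightarrow> y \<in> carrier_mat n n \<Longrightarrow> f (x + y) = f x + f y"
    and smult: "\<And>c x. x \<in> carrier_mat n n \<Longrightarrow> f (c \<cdot>\<^sub>m x) = c \<cdot>\<^sub>m f x"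
    and zero: "f (0\<^sub>m n n) \<in> mat_span n T"
    and base: "\<And>s. s \<in> S \<Longrightarrow> f s \<in> mat_span n T"
    and x: "x \<in> mat_span n S"
  shows "f x \<in> mat_span n T"
proof -
  from x have "x \<in> carrier_mat n n \<and> f x \<in> mat_span n T"
    by (induction rule: mat_span.induct)
       (use zero base S add smult in \<open>auto intro: mat_span.intros\<close>)
  then show ?thesis by blast
qed

lemma mat_span_sandwich:
  assumes S: "S \<subseteq> carrier_mat n n" and A: "A \<in> carrier_mat n n" and B: "B \<in> carrier_mat n n"
    and base: "\<And>s. s \<in> S \<Longrightarrow> A * s * B \<in> mat_span n T"
    and x: "x \<in> mat_span n S"
  shows "A * x * B \<in> mat_span n T"
proof (rule mat_span_linear_image[where f = "\<lambda>x. A * x * B", OF S _ _ _ base x])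
  fix x y :: "'a mat" assume "x \<in> carrier_mat n n" "y \<in> carrier_mat n n"
  then show "A * (x + y) * B = A * x * B + A * y * B"
    using A B by (simp add: mult_add_distrib_mat[of _ n n] add_mult_distrib_mat[of _ n n])
next
  fix c and x :: "'a mat" assume "x \<in> carrier_mat n n"
  then show "A * (c \<cdot>\<^sub>m x) * B = c \<cdot>\<^sub>m (A * x * B)"
    using A B by (simp add: mult_smult_distrib[of _ n n] mult_smult_assoc_mat[of _ n n])
next
  show "A * 0\<^sub>m n n * B \<in> mat_span n T" using A B by (simp add: mat_span_zero)
qed

lemma mat_span_mult_left:
  assumes "S \<subseteq> carrier_mat n n" "A \<in> carrier_mat n n"
    and "\<And>s. s \<in> S \<Longrightarrow> A * s \<in> mat_span n T" and x: "x \<in> mat_span n S"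
  shows "A * x \<in> mat_span n T"
proof -
  have "A * x * 1\<^sub>m n \<in> mat_span n T"
    by (rule mat_span_sandwich[OF assms(1,2) one_carrier_mat _ x]) (use assms in auto)
  then show ?thesis using mat_span_carrier[OF assms(1) x] assms(2) by simp
qed

lemma mat_span_mult_right:
  assumes "S \<subseteq> carrier_mat n n" "B \<in> carrier_mat n n"
    and "\<And>s. s \<in> S \<Longrightarrow> s * B \<in> mat_span n T" and x: "x \<in> mat_span n S"
  shows "x * B \<in> mat_span n T"
proof -
  have "1\<^sub>m n * x * B \<in> mat_span n T"
    by (rule mat_span_sandwich[OF assms(1) one_carrier_mat assms(2) _ x]) (use assms in auto)
  then show ?thesis using mat_span_carrier[OF assms(1) x] by simp
qed

lemma mat_span_mult:
  assumes "S \<subseteq> carrier_mat n n" "T \<subseteq> carrier_mat n n"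
    and "\<And>s t. s \<in> S \<Longrightarrow> t \<in> T \<Longrightarrow> s * t \<in> mat_span n U"
    and x: "x \<in> mat_span n S" and y: "y \<in> mat_span n T"
  shows "x * y \<in> mat_span n U"
proof (rule mat_span_mult_right[OF assms(1) mat_span_carrier[OF assms(2) y] _ x])
  fix s assume "s \<in> S"
  then show "s * y \<in> mat_span n U"
    using assms by (intro mat_span_mult_left[OF assms(2) _ _ y]) auto
qed

lemma mat_span_singleton:
  assumes A: "A \<in> carrier_mat n n" and x: "x \<in> mat_span n {A}"
  shows "\<exists>c. x = c \<cdot>\<^sub>m A"
  using x
proof (induction rule: mat_span.induct)
  case mat_span_zero
  have "0\<^sub>m n n = 0 \<cdot>\<^sub>m A" using A by (intro eq_matI) auto
  then show ?case by blast
next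
  case (mat_span_base x)
  then have "x = 1 \<cdot>\<^sub>m A" by (intro eq_matI) auto
  then show ?case by blast
next
  case (mat_span_add x y)
  then obtain a b where "x = a \<cdot>\<^sub>m A" "y = b \<cdot>\<^sub>m A" by blast
  then have "x + y = (a + b) \<cdot>\<^sub>m A" by (intro eq_matI) (auto simp: algebra_simps)
  then show ?case by blast
next
  case (mat_span_smult x c)
  then obtain a where "x = a \<cdot>\<^sub>m A" by blast
  then have "c \<cdot>\<^sub>m x = (c * a) \<cdot>\<^sub>m A" by (intro eq_matI) auto
  then show ?case by blast
qed

lemma msum_cong: "(\<And>x. x \<in> set xs \<Longrightarrow> f x = g x) \<Longrightarrow> msum n f xs = msum n g xs"
  unfolding msum_def by (induction xs) auto

lemma msum_carrier:
  "(\<And>x. x \<in> set xs \<Longrightarrow> f x \<in> carrier_mat n n) \<Longrightarrow> msum n f xs \<in> carrier_mat n n"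
  unfolding msum_def by (induction xs) auto

lemma msum_in_mat_span:
  "(\<And>x. x \<in> set xs \<Longrightarrow> f x \<in> mat_span n T) \<Longrightarrow> msum n f xs \<in> mat_span n T"
  unfolding msum_def by (induction xs) (auto intro: mat_span.intros)

lemma msum_sandwich:
  assumes "A \<in> carrier_mat n n" "B \<in> carrier_mat n n"
    and "\<And>x. x \<in> set xs \<Longrightarrow> f x \<in> carrier_mat n n"
  shows "A * msum n f xs * B = msum n (\<lambda>x. A * f x * B) xs"
  using assms(3) unfolding msum_def
proof (induction xs)
  case (Cons x xs)
  define R where "R = foldr (\<lambda>i acc. f i + acc) xs (0\<^sub>m n n)"
  have R: "R \<in> carrier_mat n n" "f x \<in> carrier_mat n n"
    using Cons.prems msum_carrier[of xs f n] unfolding msum_def R_def by auto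
  have "A * (f x + R) * B = A * f x * B + A * R * B"
    using R assms(1,2) by (simp add: mult_add_distrib_mat[of _ n n] add_mult_distrib_mat[of _ n n])
  then show ?case using Cons unfolding R_def by simp
qed (use assms in simp)

section \<open>The ground-state projector and the reduced resolvent\<close>

lemma mat_adjoint_dim [simp]:
  "dim_row (mat_adjoint A) = dim_col A" "dim_col (mat_adjoint A) = dim_row A"
  unfolding mat_adjoint_def by auto

lemma mat_adjoint_index [simp]:
  "i < dim_col A \<Longrightarrow> j < dim_row A \<Longrightarrow> mat_adjoint (A :: complex mat) $$ (i, j) = cnj (A $$ (j, i))"
  unfolding mat_adjoint_def by (simp add: mat_of_rows_index)

lemma mat_adjoint_carrier: "A \<in> carrier_mat n m \<Longrightarrow> mat_adjoint (A :: complex mat) \<in> carrier_mat m n"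
  unfolding carrier_mat_def by simp

lemma mat_adjoint_adjoint [simp]: "mat_adjoint (mat_adjoint (A :: complex mat)) = A"
  by (intro eq_matI) auto

lemma mat_adjoint_zero [simp]: "mat_adjoint (0\<^sub>m n m :: complex mat) = 0\<^sub>m m n"
  by (intro eq_matI) auto

lemma mat_adjoint_mult:
  assumes A: "(A :: complex mat) \<in> carrier_mat n k" and B: "B \<in> carrier_mat k m"
  shows "mat_adjoint (A * B) = mat_adjoint B * mat_adjoint A"
proof (rule eq_matI)
  fix i j assume "i < dim_row (mat_adjoint B * mat_adjoint A)" "j < dim_col (mat_adjoint B * mat_adjoint A)"
  then have i: "i < m" and j: "j < n" using A B by auto
  have "mat_adjoint (A * B) $$ (i, j) = cnj (\<Sum>l<k. A $$ (j, l) * B $$ (l, i))"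
    using i j A B by (simp add: scalar_prod_def row_def col_def lessThan_atLeast0)
  also have "\<dots> = (\<Sum>l<k. cnj (B $$ (l, i)) * cnj (A $$ (j, l)))"
    by (simp add: cnj_sum mult.commute)
  also have "\<dots> = (mat_adjoint B * mat_adjoint A) $$ (i, j)"
    using i j A B by (simp add: scalar_prod_def row_def col_def lessThan_atLeast0)
  finally show "mat_adjoint (A * B) $$ (i, j) = (mat_adjoint B * mat_adjoint A) $$ (i, j)" .
qed (use A B in auto)

lemma mat_eq_by_mult_vec:
  assumes A: "(A :: 'a :: comm_ring_1 mat) \<in> carrier_mat n m" and B: "B \<in> carrier_mat n m"
    and eq: "\<And>v. v \<in> carrier_vec m \<Longrightarrow> A *\<^sub>v v = B *\<^sub>v v"
  shows "A = B"
proof (rule eq_matI)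
  fix i j assume "i < dim_row B" "j < dim_col B"
  then have i: "i < n" and j: "j < m" using B by auto
  have "A $$ (i, j) = (A *\<^sub>v unit_vec m j) $ i" using A i j by (simp add: row_def)
  also have "\<dots> = (B *\<^sub>v unit_vec m j) $ i" using eq[of "unit_vec m j"] by simp
  also have "\<dots> = B $$ (i, j)" using B i j by (simp add: row_def)
  finally show "A $$ (i, j) = B $$ (i, j)" .
qed (use A B in auto)

lemma zero_mat_mult_vec: "(v :: 'a :: comm_ring_1 vec) \<in> carrier_vec m \<Longrightarrow> 0\<^sub>m n m *\<^sub>v v = 0\<^sub>v n"
  by (intro eq_vecI) (auto simp: scalar_prod_def row_def)

lemma mat_mult_zero_vec: "(A :: 'a :: comm_ring_1 mat) \<in> carrier_mat n m \<Longrightarrow> A *\<^sub>v 0\<^sub>v m = 0\<^sub>v n"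
  by (intro eq_vecI) (auto simp: scalar_prod_def row_def)

lemma smult_one_mat_mult_vec:
  assumes v: "(v :: 'a :: comm_ring_1 vec) \<in> carrier_vec n" shows "(c \<cdot>\<^sub>m 1\<^sub>m n) *\<^sub>v v = c \<cdot>\<^sub>v v"
proof (rule eq_vecI)
  fix i assume "i < dim_vec (c \<cdot>\<^sub>v v)"
  then have i: "i < n" using v by simp
  have "((c \<cdot>\<^sub>m 1\<^sub>m n) *\<^sub>v v) $ i = (\<Sum>j\<in>{0..<n}. (c \<cdot>\<^sub>m 1\<^sub>m n) $$ (i, j) * v $ j)"
    using i v by (simp add: scalar_prod_def row_def)
  also have "\<dots> = (\<Sum>j\<in>{0..<n}. if i = j then c * v $ j else 0)" using i by (intro sum.cong) auto
  also have "\<dots> = (c \<cdot>\<^sub>v v) $ i" using i v by simp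
  finally show "((c \<cdot>\<^sub>m 1\<^sub>m n) *\<^sub>v v) $ i = (c \<cdot>\<^sub>v v) $ i" .
qed (use v in auto)

lemma mat_kernel_corthogonal_spanning_list:
  fixes A :: "complex mat"
  assumes A: "A \<in> carrier_mat d d"
  shows "\<exists>us. set us \<subseteq> carrier_vec d \<and> corthogonal us \<and>
     (\<forall>v \<in> carrier_vec d. A *\<^sub>v v = 0\<^sub>v d \<longleftrightarrow>
        (\<exists>w \<in> carrier_vec (length us). v = mat_of_cols d us *\<^sub>v w))"
proof -
  interpret K: kernel d d A using A by unfold_locales
  obtain B where "finite B" and B: "K.basis B" using kernel_basis_exists[OF A] by blast
  have BK: "B \<subseteq> mat_kernel A" and "K.span B = mat_kernel A" and "\<not> K.lin_dep B"
    using B unfolding K.Ker.basis_def by auto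
  then have span_B: "K.NC.span B = mat_kernel A" and indep_B: "\<not> K.NC.lin_dep B"
    using K.span_same[OF BK] K.lindep_same[OF BK] by simp_all
  obtain ws where ws: "set ws = B" "distinct ws" using finite_distinct_list[OF \<open>finite B\<close>] by blast
  interpret C: cof_vec_space d "TYPE(complex)" .
  have "B \<subseteq> carrier_vec d" using BK mat_kernel[OF A] by auto
  define us where "us = gram_schmidt d ws"
  note gs = C.gram_schmidt_result[OF _ ws(2) _ us_def]
  have us: "K.NC.span (set ws) = K.NC.span (set us)" "corthogonal us" "set us \<subseteq> carrier_vec d"
    using gs \<open>B \<subseteq> carrier_vec d\<close> ws indep_B by auto
  have dim_us: "\<forall>w\<in>set us. dim_vec w = d" using us(3) by auto
  have lincomb: "K.NC.lincomb_list c us = mat_of_cols d us *\<^sub>v vec (length us) c" for c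
    using K.NC.lincomb_list_as_mat_mult[OF dim_us, of c] by simp
  show ?thesis
  proof (intro exI conjI ballI)
    fix v :: "complex vec" assume v: "v \<in> carrier_vec d"
    have "A *\<^sub>v v = 0\<^sub>v d \<longleftrightarrow> v \<in> K.NC.span_list us"
      using v A span_B us ws K.NC.span_list_as_span[OF us(3)] unfolding mat_kernel_def by auto
    also have "\<dots> \<longleftrightarrow> (\<exists>w \<in> carrier_vec (length us). v = mat_of_cols d us *\<^sub>v w)"
    proof
      assume "v \<in> K.NC.span_list us"
      then obtain c where "v = K.NC.lincomb_list c us" by (auto elim: K.NC.in_span_listE)
      then show "\<exists>w \<in> carrier_vec (length us). v = mat_of_cols d us *\<^sub>v w" by (auto simp: lincomb)
    next
      assume "\<exists>w \<in> carrier_vec (length us). v = mat_of_cols d us *\<^sub>v w"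
      then obtain w where w: "w \<in> carrier_vec (length us)" "v = mat_of_cols d us *\<^sub>v w" by blast
      then have "w = vec (length us) (\<lambda>k. w $ k)" by (intro eq_vecI) auto
      then have "v = K.NC.lincomb_list (\<lambda>k. w $ k) us" using w lincomb by metis
      then show "v \<in> K.NC.span_list us" by (intro K.NC.in_span_listI) auto
    qed
    finally show "A *\<^sub>v v = 0\<^sub>v d \<longleftrightarrow> (\<exists>w \<in> carrier_vec (length us). v = mat_of_cols d us *\<^sub>v w)" .
  qed (use us in auto)
qed

lemma corthogonal_gram_mat_inverse:
  fixes us :: "complex vec list"
  assumes us: "set us \<subseteq> carrier_vec d" "corthogonal us"
  defines "U \<equiv> mat_of_cols d us" and "m \<equiv> length us"
  shows "\<exists>D. D \<in> carrier_mat m m \<and> D * (mat_adjoint U * U) = 1\<^sub>m m \<and> mat_adjoint D = D"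
proof -
  define N where "N = mat_adjoint U * U"
  have U_c: "U \<in> carrier_mat d m" unfolding U_def m_def by simp
  have Nc: "N \<in> carrier_mat m m" unfolding N_def using mat_adjoint_carrier[OF U_c] U_c by simp
  have N: "N $$ (k, l) = us ! l \<bullet>c us ! k" if "k < m" "l < m" for k l
  proof -
    have "us ! k \<in> carrier_vec d" "us ! l \<in> carrier_vec d" using us that m_def by auto
    then show ?thesis
      using that unfolding N_def U_def m_def
      by (simp add: scalar_prod_def row_def col_def mat_of_cols_def mult.commute)
  qed
  have N_offdiag: "N $$ (k, l) = 0" if "k < m" "l < m" "k \<noteq> l" for k l
    using N[OF that(1,2)] us(2) that m_def by (auto simp: corthogonal_def)
  have N_diag: "N $$ (k, k) \<noteq> 0" "cnj (N $$ (k, k)) = N $$ (k, k)" if "k < m" for k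
  proof -
    show "N $$ (k, k) \<noteq> 0" using N[OF that that] us(2) that m_def by (auto simp: corthogonal_def)
    have "us ! k \<in> carrier_vec d" using us that m_def by auto
    then show "cnj (N $$ (k, k)) = N $$ (k, k)"
      unfolding N[OF that that] by (simp add: scalar_prod_def cnj_sum mult.commute)
  qed
  define D where "D = mat m m (\<lambda>(k, l). if k = l then inverse (N $$ (k, k)) else 0)"
  have "D * N = 1\<^sub>m m"
  proof (rule eq_matI)
    fix k l assume "k < dim_row (1\<^sub>m m)" "l < dim_col (1\<^sub>m m)"
    then have k: "k < m" and l: "l < m" by auto
    have "(D * N) $$ (k, l) = (\<Sum>j\<in>{0..<m}. (if k = j then inverse (N $$ (k, k)) else 0) * N $$ (j, l))"
      using k l Nc unfolding D_def by (simp add: scalar_prod_def row_def col_def)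
    also have "\<dots> = (\<Sum>j\<in>{0..<m}. if k = j then inverse (N $$ (k, k)) * N $$ (k, l) else 0)"
      by (rule sum.cong) auto
    also have "\<dots> = 1\<^sub>m m $$ (k, l)" using k l N_offdiag N_diag by (cases "k = l") auto
    finally show "(D * N) $$ (k, l) = 1\<^sub>m m $$ (k, l)" .
  qed (use Nc in \<open>auto simp: D_def\<close>)
  moreover have "mat_adjoint D = D"
    by (intro eq_matI) (use N_diag in \<open>auto simp: D_def\<close>)
  moreover have "D \<in> carrier_mat m m" unfolding D_def by simp
  ultimately show ?thesis unfolding N_def by blast
qed

lemma column_space_projector:
  fixes U D :: "complex mat"
  assumes U: "U \<in> carrier_mat d m" and D: "D \<in> carrier_mat m m"
    and DU: "D * (mat_adjoint U * U) = 1\<^sub>m m" and D_adj: "mat_adjoint D = D"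
  defines "P \<equiv> U * D * mat_adjoint U"
  shows "P \<in> carrier_mat d d" "P * P = P" "mat_adjoint P = P"
    and "\<And>v. v \<in> carrier_vec d \<Longrightarrow> P *\<^sub>v v = v \<longleftrightarrow> (\<exists>w \<in> carrier_vec m. v = U *\<^sub>v w)"
proof -
  define Uh where "Uh = mat_adjoint U"
  have Uh: "Uh \<in> carrier_mat m d" unfolding Uh_def using mat_adjoint_carrier[OF U] .
  have DUh: "D * Uh \<in> carrier_mat m d" using D Uh by simp
  show Pc: "P \<in> carrier_mat d d" unfolding P_def using U D mat_adjoint_carrier[OF U] by simp
  have P: "P = U * (D * Uh)" unfolding P_def Uh_def by (rule assoc_mult_mat[OF U D Uh[unfolded Uh_def]])
  have PU: "P * U = U"
  proof -
    have "P * U = U * (D * (Uh * U))"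
      unfolding P by (simp only: assoc_mult_mat[OF U DUh U] assoc_mult_mat[OF D Uh U])
    then show ?thesis using U DU unfolding Uh_def by simp
  qed
  show "P * P = P"
  proof -
    have "P * P = (P * U) * (D * Uh)" unfolding P by (rule assoc_mult_mat[OF Pc[unfolded P] U DUh, symmetric])
    then show ?thesis unfolding PU P[symmetric] .
  qed
  show "mat_adjoint P = P"
  proof -
    have "mat_adjoint P = mat_adjoint Uh * mat_adjoint (U * D)"
      unfolding P_def Uh_def[symmetric] by (rule mat_adjoint_mult) (use U D Uh in auto)
    also have "\<dots> = U * (D * Uh)" unfolding Uh_def by (simp add: mat_adjoint_mult[OF U D] D_adj)
    finally show ?thesis unfolding P .
  qed
  fix v :: "complex vec" assume v: "v \<in> carrier_vec d"
  show "P *\<^sub>v v = v \<longleftrightarrow> (\<exists>w \<in> carrier_vec m. v = U *\<^sub>v w)"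
  proof
    assume "P *\<^sub>v v = v"
    then have "v = U *\<^sub>v ((D * Uh) *\<^sub>v v)" unfolding P using U DUh v by simp
    then show "\<exists>w \<in> carrier_vec m. v = U *\<^sub>v w" using DUh v by auto
  next
    assume "\<exists>w \<in> carrier_vec m. v = U *\<^sub>v w"
    then obtain w where w: "w \<in> carrier_vec m" "v = U *\<^sub>v w" by blast
    then have "P *\<^sub>v v = (P * U) *\<^sub>v w" using Pc U by simp
    then show "P *\<^sub>v v = v" unfolding PU w(2) .
  qed
qed

lemma kernel_projector_exists:
  fixes A :: "complex mat"
  assumes A: "A \<in> carrier_mat d d"
  shows "\<exists>P. P \<in> carrier_mat d d \<and> P * P = P \<and> mat_adjoint P = P \<and>
     (\<forall>v \<in> carrier_vec d. P *\<^sub>v v = v \<longleftrightarrow> A *\<^sub>v v = 0\<^sub>v d)"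
proof -
  obtain us where us: "set us \<subseteq> carrier_vec d" "corthogonal us"
    and ker: "\<forall>v \<in> carrier_vec d. A *\<^sub>v v = 0\<^sub>v d \<longleftrightarrow>
        (\<exists>w \<in> carrier_vec (length us). v = mat_of_cols d us *\<^sub>v w)"
    using mat_kernel_corthogonal_spanning_list[OF A] by blast
  obtain D where "D \<in> carrier_mat (length us) (length us)"
    "D * (mat_adjoint (mat_of_cols d us) * mat_of_cols d us) = 1\<^sub>m (length us)" "mat_adjoint D = D"
    using corthogonal_gram_mat_inverse[OF us] by blast
  from column_space_projector[OF mat_of_cols_carrier(1) this] ker show ?thesis by blast
qed

lemma hermitian_projector_unique:
  fixes P X :: "complex mat"
  assumes P: "P \<in> carrier_mat d d" "P * P = P" "mat_adjoint P = P"
    and X: "X \<in> carrier_mat d d" "X * X = X" "mat_adjoint X = X"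
    and same_fixed: "\<And>v. v \<in> carrier_vec d \<Longrightarrow> X *\<^sub>v v = v \<longleftrightarrow> P *\<^sub>v v = v"
  shows "X = P"
proof -
  have fixed: "M *\<^sub>v (M *\<^sub>v v) = M *\<^sub>v v" if "M \<in> carrier_mat d d" "M * M = M" "v \<in> carrier_vec d"
    for M v using that by (metis assoc_mult_mat_vec)
  have XP: "X * P = P"
    by (rule mat_eq_by_mult_vec[of _ d d]) (use P X same_fixed fixed[OF P(1,2)] in auto)
  have "P * X = X"
    by (rule mat_eq_by_mult_vec[of _ d d]) (use P X same_fixed fixed[OF X(1,2)] in auto)
  then have "X = mat_adjoint (P * X)" using X(3) by simp
  also have "\<dots> = P" unfolding mat_adjoint_mult[OF P(1) X(1)] X(3) P(3) XP ..
  finally show ?thesis .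
qed

text \<open>No property of \<open>ground_energy\<close> beyond being a real number is needed: for every real
  \<open>E\<close> the orthogonal projector onto the \<open>E\<close>-eigenspace exists and is unique.\<close>

lemma ground_proj_kernel_projector:
  fixes H :: "complex mat"
  assumes H: "H \<in> carrier_mat d d"
  defines "A \<equiv> complex_of_real (ground_energy H) \<cdot>\<^sub>m 1\<^sub>m d - H"
  shows "ground_proj H \<in> carrier_mat d d \<and> ground_proj H * ground_proj H = ground_proj H \<and>
    mat_adjoint (ground_proj H) = ground_proj H \<and>
    (\<forall>v \<in> carrier_vec d. ground_proj H *\<^sub>v v = v \<longleftrightarrow> A *\<^sub>v v = 0\<^sub>v d)"
proof -
  let ?E = "complex_of_real (ground_energy H)"
  have A_c: "A \<in> carrier_mat d d" unfolding A_def using H by (simp add: minus_carrier_mat)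
  have eigen: "A *\<^sub>v v = 0\<^sub>v d \<longleftrightarrow> H *\<^sub>v v = ?E \<cdot>\<^sub>v v" if v: "v \<in> carrier_vec d" for v
  proof -
    have "A *\<^sub>v v = ?E \<cdot>\<^sub>v v - H *\<^sub>v v"
      unfolding A_def using v H by (simp add: minus_mult_distrib_mat_vec[of _ d d] smult_one_mat_mult_vec)
    then show ?thesis using v H by (auto simp: vec_eq_iff)
  qed
  obtain P where P: "P \<in> carrier_mat d d" "P * P = P" "mat_adjoint P = P"
    and P_fixed: "\<forall>v \<in> carrier_vec d. P *\<^sub>v v = v \<longleftrightarrow> A *\<^sub>v v = 0\<^sub>v d"
    using kernel_projector_exists[OF A_c] by blast
  have "ground_proj H = P"
    unfolding ground_proj_def carrier_matD(1)[OF H]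
  proof (rule the_equality)
    show "P \<in> carrier_mat d d \<and> P * P = P \<and> mat_adjoint P = P \<and>
      (\<forall>v\<in>carrier_vec d. P *\<^sub>v v = v \<longleftrightarrow> H *\<^sub>v v = ?E \<cdot>\<^sub>v v)"
      using P P_fixed eigen by auto
  next
    fix X assume "X \<in> carrier_mat d d \<and> X * X = X \<and> mat_adjoint X = X \<and>
      (\<forall>v\<in>carrier_vec d. X *\<^sub>v v = v \<longleftrightarrow> H *\<^sub>v v = ?E \<cdot>\<^sub>v v)"
    then show "X = P" using hermitian_projector_unique[OF P] P_fixed eigen by auto
  qed
  then show ?thesis using P P_fixed by simp
qed

lemma kernel_projector_annihilates:
  fixes A P :: "complex mat"
  assumes A: "A \<in> carrier_mat d d" "mat_adjoint A = A"
    and P: "P \<in> carrier_mat d d" "P * P = P" "mat_adjoint P = P"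
    and P_fixed: "\<And>v. v \<in> carrier_vec d \<Longrightarrow> P *\<^sub>v v = v \<longleftrightarrow> A *\<^sub>v v = 0\<^sub>v d"
  shows "A * P = 0\<^sub>m d d" "P * A = 0\<^sub>m d d"
proof -
  show AP: "A * P = 0\<^sub>m d d"
  proof (rule mat_eq_by_mult_vec[of _ d d])
    fix v :: "complex vec" assume v: "v \<in> carrier_vec d"
    have "P *\<^sub>v (P *\<^sub>v v) = P *\<^sub>v v" using P v by (metis assoc_mult_mat_vec)
    then have "A *\<^sub>v (P *\<^sub>v v) = 0\<^sub>v d" using P_fixed[of "P *\<^sub>v v"] v P by simp
    then show "(A * P) *\<^sub>v v = 0\<^sub>m d d *\<^sub>v v" using A P v by (simp add: zero_mat_mult_vec)
  qed (use A P in auto)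
  have "mat_adjoint (P * A) = 0\<^sub>m d d" unfolding mat_adjoint_mult[OF P(1) A(1)] A(2) P(3) AP ..
  then show "P * A = 0\<^sub>m d d" by (metis mat_adjoint_adjoint mat_adjoint_zero)
qed

lemma kernel_projector_add_invertible:
  fixes A P :: "complex mat"
  assumes A: "A \<in> carrier_mat d d" and P: "P \<in> carrier_mat d d" "P * P = P"
    and PA: "P * A = 0\<^sub>m d d"
    and P_fixed: "\<And>v. v \<in> carrier_vec d \<Longrightarrow> P *\<^sub>v v = v \<longleftrightarrow> A *\<^sub>v v = 0\<^sub>v d"
  shows "\<exists>B. B \<in> carrier_mat d d \<and> B * (A + P) = 1\<^sub>m d \<and> (A + P) * B = 1\<^sub>m d"
proof -
  have AP_c: "A + P \<in> carrier_mat d d" using A P by simp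
  have "v = 0\<^sub>v d" if v: "v \<in> carrier_vec d" and AP_v: "(A + P) *\<^sub>v v = 0\<^sub>v d" for v
  proof -
    have sum: "A *\<^sub>v v + P *\<^sub>v v = 0\<^sub>v d" using AP_v A P v by (simp add: add_mult_distrib_mat_vec)
    have "P *\<^sub>v (A *\<^sub>v v + P *\<^sub>v v) = (P * A) *\<^sub>v v + (P * P) *\<^sub>v v"
      using A P(1) v by (simp add: mult_add_distrib_mat_vec)
    then have Pv: "P *\<^sub>v v = 0\<^sub>v d" using sum P PA v by (simp add: zero_mat_mult_vec mat_mult_zero_vec)
    then have "A *\<^sub>v v = 0\<^sub>v d" using sum A v by simp
    then have "P *\<^sub>v v = v" using P_fixed[OF v] by simp
    then show ?thesis using Pv by simp
  qed
  then have "det (A + P) \<noteq> 0" using det_0_iff_vec_prod_zero[OF AP_c] by blast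
  from det_non_zero_imp_unit[OF AP_c this] show ?thesis unfolding Units_def ring_mat_def by auto
qed

lemma idempotent_complement:
  fixes P :: "'a :: comm_ring_1 mat"
  assumes P: "P \<in> carrier_mat n n" "P * P = P"
  shows "P * (1\<^sub>m n - P) = 0\<^sub>m n n" "(1\<^sub>m n - P) * P = 0\<^sub>m n n"
    "(1\<^sub>m n - P) * (1\<^sub>m n - P) = 1\<^sub>m n - P"
proof -
  have Q: "1\<^sub>m n - P \<in> carrier_mat n n" using P by (simp add: minus_carrier_mat)
  have "P * (1\<^sub>m n - P) = P - P * P" using mult_minus_distrib_mat[OF P(1) one_carrier_mat P(1)] P by simp
  then show PQ: "P * (1\<^sub>m n - P) = 0\<^sub>m n n" using P by (intro eq_matI) auto
  have "(1\<^sub>m n - P) * P = P - P * P" using minus_mult_distrib_mat[OF one_carrier_mat P(1) P(1)] P by simp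
  then show "(1\<^sub>m n - P) * P = 0\<^sub>m n n" using P by (intro eq_matI) auto
  have "(1\<^sub>m n - P) * (1\<^sub>m n - P) = (1\<^sub>m n - P) - 0\<^sub>m n n"
    using minus_mult_distrib_mat[OF one_carrier_mat P(1) Q] PQ left_mult_one_mat[OF Q] by simp
  also have "\<dots> = 1\<^sub>m n - P" using P(1) by (intro eq_matI) auto
  finally show "(1\<^sub>m n - P) * (1\<^sub>m n - P) = 1\<^sub>m n - P" .
qed

lemma kernel_projector_resolvent:
  fixes A P :: "complex mat"
  assumes A: "A \<in> carrier_mat d d" "mat_adjoint A = A"
    and P: "P \<in> carrier_mat d d" "P * P = P" "mat_adjoint P = P"
    and P_fixed: "\<And>v. v \<in> carrier_vec d \<Longrightarrow> P *\<^sub>v v = v \<longleftrightarrow> A *\<^sub>v v = 0\<^sub>v d"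
  shows "\<exists>!G. G \<in> carrier_mat d d \<and> G * P = 0\<^sub>m d d \<and> P * G = 0\<^sub>m d d \<and> G * A = 1\<^sub>m d - P"
proof -
  note AP = kernel_projector_annihilates[OF assms]
  obtain B where B: "B \<in> carrier_mat d d" "B * (A + P) = 1\<^sub>m d" "(A + P) * B = 1\<^sub>m d"
    using kernel_projector_add_invertible[OF A(1) P(1,2) AP(2) P_fixed] by blast
  have Q: "1\<^sub>m d - P \<in> carrier_mat d d" using P by (simp add: minus_carrier_mat)
  note PQ = idempotent_complement[OF P(1,2)]
  have BP: "B * P = P"
  proof -
    have "(A + P) * P = P" using A P AP by (simp add: add_mult_distrib_mat[of _ d d])
    then have "B * P = B * ((A + P) * P)" by simp
    also have "\<dots> = (B * (A + P)) * P" by (rule assoc_mult_mat[OF B(1) add_carrier_mat[OF P(1), of A] P(1), symmetric])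
    finally show ?thesis using B P by simp
  qed
  have BA: "B * A = 1\<^sub>m d - P"
  proof -
    have "B * A + P = 1\<^sub>m d" using B(2) A P B(1) BP by (simp add: mult_add_distrib_mat[of _ d d])
    moreover have "B * A = (B * A + P) - P" using A B(1) P(1) by (intro eq_matI) auto
    ultimately show ?thesis by simp
  qed
  show ?thesis
  proof (rule ex1I[where a = "(1\<^sub>m d - P) * B"], intro conjI)
    show "(1\<^sub>m d - P) * B \<in> carrier_mat d d" using Q B by simp
    show "(1\<^sub>m d - P) * B * P = 0\<^sub>m d d" using Q B P BP PQ by simp
    show "P * ((1\<^sub>m d - P) * B) = 0\<^sub>m d d"
      using Q B P PQ by (simp add: assoc_mult_mat[symmetric, of P d d _ d B d])
    show "(1\<^sub>m d - P) * B * A = 1\<^sub>m d - P" using Q B A BA PQ(3) by simp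
  next
    fix Y assume Y: "Y \<in> carrier_mat d d \<and> Y * P = 0\<^sub>m d d \<and> P * Y = 0\<^sub>m d d \<and> Y * A = 1\<^sub>m d - P"
    then have "Y * (A + P) = 1\<^sub>m d - P + 0\<^sub>m d d" using A P by (simp add: mult_add_distrib_mat[of _ d d])
    also have "\<dots> = 1\<^sub>m d - P" using P(1) by (intro eq_matI) auto
    finally have YAP: "Y * (A + P) = 1\<^sub>m d - P" .
    have "(Y * (A + P)) * B = Y * ((A + P) * B)"
      using Y by (intro assoc_mult_mat[of Y d d _ d B d]) (auto simp: A P(1) B(1))
    then have "Y = (Y * (A + P)) * B" using Y B(3) right_mult_one_mat[of Y d d] by simp
    then show "Y = (1\<^sub>m d - P) * B" unfolding YAP .
  qed
qed

lemma ground_proj_reduced_resolvent: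
  fixes H :: "complex mat"
  assumes H: "H \<in> carrier_mat d d" "hermitian_mat H"
  shows "ground_proj H \<in> carrier_mat d d" "ground_proj H * ground_proj H = ground_proj H"
    "reduced_resolvent H \<in> carrier_mat d d"
    "ground_proj H * reduced_resolvent H = 0\<^sub>m d d" "reduced_resolvent H * ground_proj H = 0\<^sub>m d d"
proof -
  define A where "A = complex_of_real (ground_energy H) \<cdot>\<^sub>m 1\<^sub>m d - H"
  have A: "A \<in> carrier_mat d d" unfolding A_def using H by (simp add: minus_carrier_mat)
  have "mat_adjoint A = A"
  proof (rule eq_matI)
    fix i j assume "i < dim_row A" "j < dim_col A"
    then have "mat_adjoint H $$ (i, j) = H $$ (i, j)" using H unfolding hermitian_mat_def by simp
    then show "mat_adjoint A $$ (i, j) = A $$ (i, j)"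
      using \<open>i < dim_row A\<close> \<open>j < dim_col A\<close> H(1) A unfolding A_def by auto
  qed (use A in auto)
  note P = ground_proj_kernel_projector[OF H(1), folded A_def]
  then show "ground_proj H \<in> carrier_mat d d" "ground_proj H * ground_proj H = ground_proj H" by auto
  have "\<exists>!G. G \<in> carrier_mat d d \<and> G * ground_proj H = 0\<^sub>m d d \<and> ground_proj H * G = 0\<^sub>m d d
      \<and> G * A = compl_proj H"
    unfolding compl_proj_def carrier_matD(1)[OF H(1)]
    by (rule kernel_projector_resolvent[OF A \<open>mat_adjoint A = A\<close>]) (use P in auto)
  from theI'[OF this] show "reduced_resolvent H \<in> carrier_mat d d"
    "ground_proj H * reduced_resolvent H = 0\<^sub>m d d" "reduced_resolvent H * ground_proj H = 0\<^sub>m d d"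
    unfolding reduced_resolvent_def carrier_matD(1)[OF H(1)] A_def by auto
qed

section \<open>Unfolding the Schrieffer--Wolff recursion\<close>

declare bernoulli.simps [simp del]

lemma sw_b_1: "sw_b 1 = 1 / 2"
proof -
  have B0: "bernoulli 0 = 1" by (subst bernoulli.simps) simp
  have B1: "bernoulli (Suc 0) = - 1 / 2" by (subst bernoulli.simps) (simp add: B0)
  have "bernoulli 2 = 1 / 6" by (subst bernoulli.simps) (simp add: numeral_2_eq_2 lessThan_Suc B0 B1)
  then show ?thesis by (simp add: sw_b_def)
qed

lemma hatS_cong:
  "(\<And>i. 1 \<le> i \<Longrightarrow> i \<le> m \<Longrightarrow> S i = S' i) \<Longrightarrow> hatS n S W k m = hatS n S' W k m"
proof (induction k arbitrary: m)
  case (Suc k)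
  show ?case unfolding hatS.simps
  proof (rule msum_cong)
    fix i assume "i \<in> set [1..<m + 1]"
    then show "ad (S i) (hatS n S W k (m - i)) = ad (S' i) (hatS n S' W k (m - i))"
      using Suc by auto
  qed
qed simp

lemma S_next_cong:
  assumes "1 \<le> n" "\<And>i. 1 \<le> i \<Longrightarrow> i < n \<Longrightarrow> S i = S' i"
  shows "S_next H V S n = S_next H V S' n"
proof (cases "n = 1")
  case False
  have "hatS m S W k (n - 1) = hatS m S' W k (n - 1)" for m W k
    by (rule hatS_cong) (use assms False in auto)
  moreover have "S (n - 1) = S' (n - 1)" using assms False by simp
  ultimately show ?thesis unfolding S_next_def Let_def by simp
qed (simp add: S_next_def)

lemma length_S_list [simp]: "length (S_list H V n) = Suc n"
  by (induction n) auto

lemma S_list_prefix_nth: "i \<le> n \<Longrightarrow> S_list H V (n + k) ! i = S_list H V n ! i"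
  by (induction k) (auto simp: nth_append)

lemma SW_S_Suc: "SW_S H V (Suc n) = S_next H V (SW_S H V) (Suc n)"
proof -
  have "SW_S H V (Suc n) = S_next H V (\<lambda>i. S_list H V n ! i) (Suc n)"
    unfolding SW_S_def by (simp add: nth_append)
  also have "\<dots> = S_next H V (SW_S H V) (Suc n)"
  proof (rule S_next_cong)
    fix i assume "1 \<le> i" "i < Suc n"
    then show "S_list H V n ! i = SW_S H V i"
      using S_list_prefix_nth[of i i H V "n - i"] unfolding SW_S_def by simp
  qed simp
  finally show ?thesis .
qed

section \<open>Words in the perturbation and the reduced resolvent\<close>

text \<open>Only these algebraic relations between \<open>P\<^sub>0\<close> and \<open>G\<close> are used below; Hermiticity of
  \<open>H\<^sub>0\<close> is needed only to establish them, and that of \<open>V\<close> not at all.\<close>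

locale sw_setting =
  fixes H V :: "complex mat" and d :: nat
  assumes H_carrier: "H \<in> carrier_mat d d" and V_carrier [simp]: "V \<in> carrier_mat d d"
    and P_carrier [simp]: "ground_proj H \<in> carrier_mat d d"
    and G_carrier [simp]: "reduced_resolvent H \<in> carrier_mat d d"
    and PP [simp]: "ground_proj H * ground_proj H = ground_proj H"
    and PG [simp]: "ground_proj H * reduced_resolvent H = 0\<^sub>m d d"
    and GP [simp]: "reduced_resolvent H * ground_proj H = 0\<^sub>m d d"
begin

abbreviation "P \<equiv> ground_proj H"
abbreviation "G \<equiv> reduced_resolvent H"
abbreviation "Q \<equiv> compl_proj H"
abbreviation "Vd \<equiv> V_diag H V"
abbreviation "Vod \<equiv> V_offdiag H V"
abbreviation Cd :: "complex mat set" where "Cd \<equiv> carrier_mat d d"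

lemma dim_H [simp]: "dim_row H = d"
  using H_carrier by simp

lemma carrier_closed [simp]:
  "A \<in> Cd \<Longrightarrow> B \<in> Cd \<Longrightarrow> A * B \<in> Cd" "A \<in> Cd \<Longrightarrow> B \<in> Cd \<Longrightarrow> A + B \<in> Cd"
  "A \<in> Cd \<Longrightarrow> B \<in> Cd \<Longrightarrow> A - B \<in> Cd" "A \<in> Cd \<Longrightarrow> - A \<in> Cd"
  "A \<in> Cd \<Longrightarrow> c \<cdot>\<^sub>m A \<in> Cd" "A \<in> Cd \<Longrightarrow> A ^\<^sub>m k \<in> Cd"
  by auto

lemma dims [simp]:
  "dim_row P = d" "dim_col P = d" "dim_row G = d" "dim_col G = d" "dim_row V = d" "dim_col V = d"
  using P_carrier G_carrier V_carrier unfolding carrier_mat_def by simp_all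

lemma mat_assoc [simp]: "A \<in> Cd \<Longrightarrow> B \<in> Cd \<Longrightarrow> C \<in> Cd \<Longrightarrow> A * B * C = A * (B * C)"
  by simp

lemma mat_distrib [simp]:
  "A \<in> Cd \<Longrightarrow> B \<in> Cd \<Longrightarrow> C \<in> Cd \<Longrightarrow> A * (B + C) = A * B + A * C"
  "A \<in> Cd \<Longrightarrow> B \<in> Cd \<Longrightarrow> C \<in> Cd \<Longrightarrow> (A + B) * C = A * C + B * C"
  "A \<in> Cd \<Longrightarrow> B \<in> Cd \<Longrightarrow> C \<in> Cd \<Longrightarrow> A * (B - C) = A * B - A * C"
  "A \<in> Cd \<Longrightarrow> B \<in> Cd \<Longrightarrow> C \<in> Cd \<Longrightarrow> (A - B) * C = A * C - B * C"
  "A \<in> Cd \<Longrightarrow> B \<in> Cd \<Longrightarrow> A * (c \<cdot>\<^sub>m B) = c \<cdot>\<^sub>m (A * B)"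
  "A \<in> Cd \<Longrightarrow> B \<in> Cd \<Longrightarrow> (c \<cdot>\<^sub>m A) * B = c \<cdot>\<^sub>m (A * B)"
  by (auto simp: mult_add_distrib_mat[of _ d d] add_mult_distrib_mat[of _ d d]
      mult_minus_distrib_mat[of _ d d] minus_mult_distrib_mat[of _ d d]
      mult_smult_distrib[of _ d d] mult_smult_assoc_mat[of _ d d])

lemma mat_unit_simps [simp]:
  "A \<in> Cd \<Longrightarrow> 0\<^sub>m d d * A = 0\<^sub>m d d" "A \<in> Cd \<Longrightarrow> A * 0\<^sub>m d d = 0\<^sub>m d d"
  "A \<in> Cd \<Longrightarrow> 1\<^sub>m d * A = A" "A \<in> Cd \<Longrightarrow> A * 1\<^sub>m d = A"
  "A \<in> Cd \<Longrightarrow> A + 0\<^sub>m d d = A" "A \<in> Cd \<Longrightarrow> 0\<^sub>m d d + A = A"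
  "A \<in> Cd \<Longrightarrow> A - A = 0\<^sub>m d d" "A \<in> Cd \<Longrightarrow> A - 0\<^sub>m d d = A" "A \<in> Cd \<Longrightarrow> 0\<^sub>m d d - A = - A"
  "- 0\<^sub>m d d = (0\<^sub>m d d :: complex mat)"
  by (auto intro!: eq_matI)

lemma Q_eq: "Q = 1\<^sub>m d - P"
  unfolding compl_proj_def by simp

lemma Q_carrier [simp]: "Q \<in> Cd"
  unfolding Q_eq by simp

lemma projector_simps [simp]:
  "P * Q = 0\<^sub>m d d" "Q * P = 0\<^sub>m d d" "Q * G = G" "G * Q = G" "Q * Q = Q"
  unfolding Q_eq by (simp_all add: mult_minus_distrib_mat[of _ d d] minus_mult_distrib_mat[of _ d d])

text \<open>Since \<open>mat_assoc\<close> normalises products to the right, every rule about a product of two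
  factors is also needed with a right-hand context.\<close>

lemma projector_simps_right [simp]:
  assumes "Z \<in> Cd"
  shows "P * (P * Z) = P * Z" "P * (G * Z) = 0\<^sub>m d d" "G * (P * Z) = 0\<^sub>m d d"
    "P * (Q * Z) = 0\<^sub>m d d" "Q * (P * Z) = 0\<^sub>m d d" "Q * (G * Z) = G * Z" "G * (Q * Z) = G * Z"
    "Q * (Q * Z) = Q * Z"
  using assms by (simp_all flip: mat_assoc)

lemma pow_mat_Suc_left: "A \<in> Cd \<Longrightarrow> A ^\<^sub>m Suc k = A * A ^\<^sub>m k"
proof (induction k)
  case (Suc k)
  then have "A ^\<^sub>m Suc (Suc k) = A * (A ^\<^sub>m k * A)" by simp
  then show ?case using Suc by (simp del: mat_assoc)
qed simp

lemma pow_mat_add: "A \<in> Cd \<Longrightarrow> A ^\<^sub>m a * A ^\<^sub>m b = A ^\<^sub>m (a + b)"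
  by (induction b) (simp_all del: mat_assoc add: mat_assoc[symmetric])

declare pow_mat.simps(2) [simp del]

lemma pow_mat_1 [simp]: "A \<in> Cd \<Longrightarrow> A ^\<^sub>m Suc 0 = A"
  by (simp add: pow_mat.simps(2))

lemma P_G_pow_Suc [simp]: "P * G ^\<^sub>m Suc k = 0\<^sub>m d d"
  by (simp add: pow_mat_Suc_left)

lemma G_pow_Suc_P [simp]: "G ^\<^sub>m Suc k * P = 0\<^sub>m d d"
  by (simp add: pow_mat.simps(2))

definition Z_letters :: "complex mat set" where
  "Z_letters = insert P (range (\<lambda>m. G ^\<^sub>m m))"

lemma Z_letters_carrier: "Z_letters \<subseteq> Cd"
  unfolding Z_letters_def by auto

lemma Z_letters_subset_Z_choices: "Z_letters \<subseteq> Z_choices H"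
  unfolding Z_letters_def Z_choices_def by auto

lemma one_P_G_in_Z_letters: "1\<^sub>m d \<in> Z_letters" "P \<in> Z_letters" "G \<in> Z_letters"
proof -
  have "G ^\<^sub>m 0 = 1\<^sub>m d" "G ^\<^sub>m 1 = G" by simp_all
  then show "1\<^sub>m d \<in> Z_letters" "P \<in> Z_letters" "G \<in> Z_letters"
    unfolding Z_letters_def by (metis rangeI insertI2, simp, metis rangeI insertI2)
qed

lemma Z_letters_mult: "Y \<in> Z_letters \<Longrightarrow> Z \<in> Z_letters \<Longrightarrow> Y * Z \<in> mat_span d Z_letters"
proof -
  have letters: "P \<in> mat_span d Z_letters" "\<And>m. G ^\<^sub>m m \<in> mat_span d Z_letters"
    unfolding Z_letters_def by (auto intro: mat_span_base)
  have "P * G ^\<^sub>m m \<in> mat_span d Z_letters" "G ^\<^sub>m m * P \<in> mat_span d Z_letters" for m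
    by (cases m; simp add: letters mat_span_zero)+
  moreover have "G ^\<^sub>m m * G ^\<^sub>m k \<in> mat_span d Z_letters" for m k
    by (simp add: pow_mat_add letters)
  ultimately show "Y \<in> Z_letters \<Longrightarrow> Z \<in> Z_letters \<Longrightarrow> Y * Z \<in> mat_span d Z_letters"
    using letters unfolding Z_letters_def by auto
qed

text \<open>\<open>Gamma n\<close> is spanned by the words \<open>Z\<^sub>0 V Z\<^sub>1 V \<dots> V Z\<^sub>n\<close> with letters in
  \<open>Z_letters\<close>; it is the space \<open>\<Gamma>(n)\<close> of the paper, since \<open>Q\<^sub>0 = G\<^sup>0 - P\<^sub>0\<close>.\<close>

fun Gamma :: "nat \<Rightarrow> complex mat set" where
  "Gamma 0 = mat_span d Z_letters"
| "Gamma (Suc n) = mat_span d {A * V * Z | A Z. A \<in> Gamma n \<and> Z \<in> Z_letters}"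

lemma Gamma_carrier: "A \<in> Gamma n \<Longrightarrow> A \<in> Cd"
proof (induction n arbitrary: A)
  case 0
  then show ?case using mat_span_carrier[OF Z_letters_carrier] by simp
next
  case (Suc n)
  have "{A * V * Z | A Z. A \<in> Gamma n \<and> Z \<in> Z_letters} \<subseteq> Cd"
    using Suc.IH Z_letters_carrier by auto
  then show ?case using Suc.prems mat_span_carrier by auto
qed

declare Gamma.simps [simp del]

lemma mat_span_Gamma [simp]: "mat_span d (Gamma n) = Gamma n"
  by (cases n) (simp_all add: mat_span_span Gamma.simps)

lemma Gamma_SucI: "A \<in> Gamma n \<Longrightarrow> Y \<in> mat_span d Z_letters \<Longrightarrow> A * V * Y \<in> Gamma (Suc n)"
  unfolding Gamma.simps(2)
  by (rule mat_span_mult_left[OF Z_letters_carrier, of "A * V"])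
     (auto simp: Gamma_carrier intro: mat_span_base)

lemma Gamma_Suc_generators_carrier: "{A * V * Z | A Z. A \<in> Gamma n \<and> Z \<in> Z_letters} \<subseteq> Cd"
  using Gamma_carrier Z_letters_carrier by auto

lemma Gamma_mult_letters: "A \<in> Gamma n \<Longrightarrow> Z \<in> mat_span d Z_letters \<Longrightarrow> A * Z \<in> Gamma n"
proof (induction n arbitrary: A)
  case 0
  then have Z: "A \<in> mat_span d Z_letters" "Z \<in> Cd"
    using mat_span_carrier[OF Z_letters_carrier] by (auto simp: Gamma.simps)
  have "Y * Z \<in> mat_span d Z_letters" if "Y \<in> Z_letters" for Y
    by (rule mat_span_mult_left[OF Z_letters_carrier _ _ 0(2)])
       (use that Z_letters_carrier Z_letters_mult in auto)
  then show ?case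
    using mat_span_mult_right[OF Z_letters_carrier Z(2) _ Z(1)] by (simp add: Gamma.simps)
next
  case (Suc n)
  have Z: "Z \<in> Cd" using mat_span_carrier[OF Z_letters_carrier Suc(3)] .
  have step: "s * Z \<in> Gamma (Suc n)" if gen: "s \<in> {A * V * Z | A Z. A \<in> Gamma n \<and> Z \<in> Z_letters}" for s
  proof -
    obtain A' Z' where s: "s = A' * V * Z'" "A' \<in> Gamma n" "Z' \<in> Z_letters" using gen by auto
    have "Z' * Z \<in> mat_span d Z_letters"
      by (rule mat_span_mult_left[OF Z_letters_carrier _ _ Suc(3)])
         (use s Z_letters_carrier Z_letters_mult in auto)
    then have "A' * V * (Z' * Z) \<in> Gamma (Suc n)" using Gamma_SucI s by blast
    then show ?thesis using s Gamma_carrier Z_letters_carrier Z by auto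
  qed
  have "A \<in> mat_span d {A * V * Z | A Z. A \<in> Gamma n \<and> Z \<in> Z_letters}"
    using Suc.prems(1) by (simp add: Gamma.simps(2))
  then have "A * Z \<in> mat_span d (Gamma (Suc n))"
    by (rule mat_span_mult_right[OF Gamma_Suc_generators_carrier Z, rotated])
       (use step in \<open>auto intro: mat_span_base\<close>)
  then show ?case by simp
qed

lemma Gamma_mult: "A \<in> Gamma a \<Longrightarrow> B \<in> Gamma b \<Longrightarrow> A * B \<in> Gamma (a + b)"
proof (induction b arbitrary: B)
  case 0
  then show ?case using Gamma_mult_letters by (simp add: Gamma.simps)
next
  case (Suc b)
  have A: "A \<in> Cd" using Gamma_carrier Suc.prems(1) .
  have step: "A * s \<in> Gamma (a + Suc b)" if gen: "s \<in> {B * V * Z | B Z. B \<in> Gamma b \<and> Z \<in> Z_letters}" for s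
  proof -
    obtain B' Z where s: "s = B' * V * Z" "B' \<in> Gamma b" "Z \<in> Z_letters" using gen by auto
    have "A * B' * V * Z \<in> Gamma (Suc (a + b))"
      using Suc.IH[OF Suc.prems(1) s(2)] Gamma_SucI s(3) mat_span_base by blast
    then show ?thesis using s A Gamma_carrier Z_letters_carrier by auto
  qed
  have "B \<in> mat_span d {B * V * Z | B Z. B \<in> Gamma b \<and> Z \<in> Z_letters}"
    using Suc.prems(2) by (simp add: Gamma.simps(2))
  then have "A * B \<in> mat_span d (Gamma (a + Suc b))"
    by (rule mat_span_mult_left[OF Gamma_Suc_generators_carrier A, rotated])
       (use step in \<open>auto intro: mat_span_base\<close>)
  then show ?case by simp
qed

lemma letters_in_Gamma_0: "1\<^sub>m d \<in> Gamma 0" "P \<in> Gamma 0" "G \<in> Gamma 0" "Q \<in> Gamma 0"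
proof -
  show "1\<^sub>m d \<in> Gamma 0" "P \<in> Gamma 0" "G \<in> Gamma 0"
    using one_P_G_in_Z_letters by (auto simp: Gamma.simps intro: mat_span_base)
  moreover have "Q = 1\<^sub>m d + (-1) \<cdot>\<^sub>m P" unfolding Q_eq by (intro eq_matI) auto
  ultimately show "Q \<in> Gamma 0"
    using mat_span_add[of _ d "Gamma 0"] mat_span_smult[of _ d "Gamma 0"] by simp
qed

lemma V_in_Gamma_1: "V \<in> Gamma 1"
  using Gamma_SucI[OF letters_in_Gamma_0(1) mat_span_base[OF one_P_G_in_Z_letters(1)]] by simp

lemma VG_pow_in_Gamma: "(V * G) ^\<^sub>m n \<in> Gamma n"
proof (induction n)
  case (Suc n)
  have "(V * G) ^\<^sub>m n * V * G \<in> Gamma (Suc n)"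
    by (rule Gamma_SucI[OF Suc mat_span_base[OF one_P_G_in_Z_letters(3)]])
  moreover have "(V * G) ^\<^sub>m Suc n = (V * G) ^\<^sub>m n * V * G" by (simp add: pow_mat.simps(2))
  ultimately show ?case by simp
qed (use letters_in_Gamma_0 in simp)

lemma GV_pow_in_Gamma: "(G * V) ^\<^sub>m n \<in> Gamma n"
proof (induction n)
  case (Suc n)
  have "(G * V) ^\<^sub>m n * G \<in> Gamma n"
    using Gamma_mult_letters[OF Suc mat_span_base[OF one_P_G_in_Z_letters(3)]] .
  then have "(G * V) ^\<^sub>m n * G * V * 1\<^sub>m d \<in> Gamma (Suc n)"
    by (rule Gamma_SucI[OF _ mat_span_base[OF one_P_G_in_Z_letters(1)]])
  moreover have "(G * V) ^\<^sub>m Suc n = (G * V) ^\<^sub>m n * G * V * 1\<^sub>m d" by (simp add: pow_mat.simps(2))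
  ultimately show ?case by simp
qed (use letters_in_Gamma_0 in simp)

lemma V_diag_offdiag_carrier [simp]: "Vd \<in> Cd" "Vod \<in> Cd"
  unfolding V_diag_def V_offdiag_def by simp_all

lemma V_diag_in_Gamma_1: "Vd \<in> Gamma 1"
proof -
  have "P * V * P \<in> Gamma (0 + 1 + 0)" "Q * V * Q \<in> Gamma (0 + 1 + 0)"
    by (intro Gamma_mult letters_in_Gamma_0 V_in_Gamma_1)+
  then show ?thesis
    unfolding V_diag_def using mat_span_add[of _ d "Gamma 1"] by simp
qed

definition split_words :: "nat \<Rightarrow> complex mat set" where
  "split_words n = {A * P * B | A B. \<exists>a b. A \<in> Gamma a \<and> B \<in> Gamma b \<and> 1 \<le> a \<and> 1 \<le> b \<and> a + b = n}"

definition Gamma_split :: "nat \<Rightarrow> complex mat set" where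
  "Gamma_split n = mat_span d (split_words n)"

lemma split_words_carrier: "split_words n \<subseteq> Cd"
  unfolding split_words_def using Gamma_carrier by fastforce

lemma Gamma_split_carrier: "X \<in> Gamma_split n \<Longrightarrow> X \<in> Cd"
  unfolding Gamma_split_def using split_words_carrier mat_span_carrier by blast

lemma split_word_in_Gamma_split:
  "A \<in> Gamma a \<Longrightarrow> B \<in> Gamma b \<Longrightarrow> 1 \<le> a \<Longrightarrow> 1 \<le> b \<Longrightarrow> n = a + b \<Longrightarrow> A * P * B \<in> Gamma_split n"
  unfolding Gamma_split_def split_words_def by (rule mat_span_base) blast

lemma Gamma_split_closed:
  "0\<^sub>m d d \<in> Gamma_split n"
  "X \<in> Gamma_split n \<Longrightarrow> Y \<in> Gamma_split n \<Longrightarrow> X + Y \<in> Gamma_split n"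
  "X \<in> Gamma_split n \<Longrightarrow> Y \<in> Gamma_split n \<Longrightarrow> X - Y \<in> Gamma_split n"
  "X \<in> Gamma_split n \<Longrightarrow> c \<cdot>\<^sub>m X \<in> Gamma_split n"
  unfolding Gamma_split_def by (auto intro: mat_span.intros mat_span_diff[OF split_words_carrier])

lemma Gamma_split_sandwich:
  assumes M: "M \<in> Gamma a" and X: "X \<in> Gamma_split n" and N: "N \<in> Gamma b"
  shows "M * X * N \<in> Gamma_split (a + n + b)"
  unfolding Gamma_split_def
proof (rule mat_span_sandwich[OF split_words_carrier Gamma_carrier[OF M] Gamma_carrier[OF N] _
      X[unfolded Gamma_split_def]])
  fix s assume "s \<in> split_words n"
  then obtain A B a' b' where s: "s = A * P * B" "A \<in> Gamma a'" "B \<in> Gamma b'" "1 \<le> a'" "1 \<le> b'"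
    "a' + b' = n" unfolding split_words_def by blast
  have "(M * A) * P * (B * N) \<in> Gamma_split (a + n + b)"
    using s M N Gamma_mult by (intro split_word_in_Gamma_split[of _ "a + a'" _ "b' + b"]) auto
  moreover have "M * s * N = (M * A) * P * (B * N)" using s M N Gamma_carrier by simp
  ultimately show "M * s * N \<in> mat_span d (split_words (a + n + b))"
    unfolding Gamma_split_def by simp
qed

lemma Gamma_split_mult_left: "M \<in> Gamma a \<Longrightarrow> X \<in> Gamma_split n \<Longrightarrow> m = a + n \<Longrightarrow> M * X \<in> Gamma_split m"
  using Gamma_split_sandwich[OF _ _ letters_in_Gamma_0(1)] Gamma_split_carrier by fastforce

lemma Gamma_split_mult_right: "X \<in> Gamma_split n \<Longrightarrow> M \<in> Gamma a \<Longrightarrow> m = n + a \<Longrightarrow> X * M \<in> Gamma_split m"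
  using Gamma_split_sandwich[OF letters_in_Gamma_0(1)] Gamma_split_carrier Gamma_carrier by fastforce

lemma Gamma_split_subset_Gamma: "X \<in> Gamma_split n \<Longrightarrow> X \<in> Gamma n"
proof -
  have "s \<in> Gamma n" if s_word: "s \<in> split_words n" for s
  proof -
    obtain A B a b where s: "s = A * P * B" "A \<in> Gamma a" "B \<in> Gamma b" "a + b = n"
      using s_word unfolding split_words_def by blast
    then show ?thesis using Gamma_mult[OF Gamma_mult[OF s(2) letters_in_Gamma_0(2)] s(3)] by simp
  qed
  then show "X \<in> Gamma_split n \<Longrightarrow> X \<in> Gamma n"
    unfolding Gamma_split_def using mat_span_subset[of "split_words n" d "Gamma n"]
    by (auto intro: mat_span_base)
qed

text \<open>\<open>Gamma_P n\<close> is spanned by the words of degree \<open>n\<close> that begin or end with \<open>P\<close>,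
  together with the split ones; it contains the generator \<open>S\<^sub>n\<close>.\<close>

definition P_words :: "nat \<Rightarrow> complex mat set" where
  "P_words n = {P * A | A. A \<in> Gamma n} \<union> {A * P | A. A \<in> Gamma n} \<union> Gamma_split n"

definition Gamma_P :: "nat \<Rightarrow> complex mat set" where
  "Gamma_P n = mat_span d (P_words n)"

lemma P_words_carrier: "P_words n \<subseteq> Cd"
  unfolding P_words_def using Gamma_carrier Gamma_split_carrier by fastforce

lemma Gamma_P_carrier: "X \<in> Gamma_P n \<Longrightarrow> X \<in> Cd"
  unfolding Gamma_P_def using P_words_carrier mat_span_carrier by blast

lemma Gamma_P_intros:
  "A \<in> Gamma n \<Longrightarrow> P * A \<in> Gamma_P n" "A \<in> Gamma n \<Longrightarrow> A * P \<in> Gamma_P n"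
  "X \<in> Gamma_split n \<Longrightarrow> X \<in> Gamma_P n"
  unfolding Gamma_P_def P_words_def by (auto intro: mat_span_base)

lemma Gamma_P_closed:
  "X \<in> Gamma_P n \<Longrightarrow> Y \<in> Gamma_P n \<Longrightarrow> X + Y \<in> Gamma_P n"
  "X \<in> Gamma_P n \<Longrightarrow> Y \<in> Gamma_P n \<Longrightarrow> X - Y \<in> Gamma_P n"
  unfolding Gamma_P_def by (auto intro: mat_span_add mat_span_diff[OF P_words_carrier])

lemma Gamma_P_subset_Gamma: "X \<in> Gamma_P n \<Longrightarrow> X \<in> Gamma n"
proof -
  have "s \<in> Gamma n" if "s \<in> P_words n" for s
    using that Gamma_mult[OF letters_in_Gamma_0(2)] Gamma_mult[OF _ letters_in_Gamma_0(2)]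
      Gamma_split_subset_Gamma unfolding P_words_def by force
  then show "X \<in> Gamma_P n \<Longrightarrow> X \<in> Gamma n"
    unfolding Gamma_P_def using mat_span_subset[of "P_words n" d "Gamma n"]
    by (auto intro: mat_span_base)
qed

lemma Gamma_sandwich_Gamma_P:
  assumes A: "A \<in> Gamma a" and X: "X \<in> Gamma_P b" and C: "C \<in> Gamma c" and "1 \<le> a" "1 \<le> c"
  shows "A * X * C \<in> Gamma_split (a + b + c)"
  unfolding Gamma_split_def
proof (rule mat_span_sandwich[OF P_words_carrier Gamma_carrier[OF A] Gamma_carrier[OF C] _
      X[unfolded Gamma_P_def]])
  fix s assume "s \<in> P_words b"
  then consider B where "s = P * B" "B \<in> Gamma b" | B where "s = B * P" "B \<in> Gamma b"
    | "s \<in> Gamma_split b"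
    unfolding P_words_def by blast
  then have "A * s * C \<in> Gamma_split (a + b + c)"
  proof cases
    case 1
    then have "A * P * (B * C) \<in> Gamma_split (a + b + c)"
      using assms Gamma_mult by (intro split_word_in_Gamma_split[of _ a _ "b + c"]) auto
    then show ?thesis using 1 A C Gamma_carrier by simp
  next
    case 2
    then have "(A * B) * P * C \<in> Gamma_split (a + b + c)"
      using assms Gamma_mult by (intro split_word_in_Gamma_split[of _ "a + b" _ c]) auto
    then show ?thesis using 2 A C Gamma_carrier by simp
  next
    case 3
    then show ?thesis by (rule Gamma_split_sandwich[OF A _ C])
  qed
  then show "A * s * C \<in> mat_span d (split_words (a + b + c))" unfolding Gamma_split_def .
qed

definition Gamma_PP :: "nat \<Rightarrow> complex mat set" where
  "Gamma_PP n = mat_span d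
     {X * Y | X Y. \<exists>a b. X \<in> Gamma_P a \<and> Y \<in> Gamma_P b \<and> 1 \<le> a \<and> 1 \<le> b \<and> a + b = n}"

lemma Gamma_PP_generators_carrier:
  "{X * Y | X Y. \<exists>a b. X \<in> Gamma_P a \<and> Y \<in> Gamma_P b \<and> 1 \<le> a \<and> 1 \<le> b \<and> a + b = n} \<subseteq> Cd"
  using Gamma_P_carrier by fastforce

lemma Gamma_PP_carrier: "X \<in> Gamma_PP n \<Longrightarrow> X \<in> Cd"
  unfolding Gamma_PP_def using Gamma_PP_generators_carrier mat_span_carrier by blast

lemma Gamma_PP_intro:
  "X \<in> Gamma_P a \<Longrightarrow> Y \<in> Gamma_P b \<Longrightarrow> 1 \<le> a \<Longrightarrow> 1 \<le> b \<Longrightarrow> n = a + b \<Longrightarrow> X * Y \<in> Gamma_PP n"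
  unfolding Gamma_PP_def by (rule mat_span_base) blast

lemma Gamma_PP_diff: "X \<in> Gamma_PP n \<Longrightarrow> Y \<in> Gamma_PP n \<Longrightarrow> X - Y \<in> Gamma_PP n"
  unfolding Gamma_PP_def by (rule mat_span_diff[OF Gamma_PP_generators_carrier])

lemma Gamma_P_mult_Gamma_PP:
  assumes X: "X \<in> Gamma_P a" and Y: "Y \<in> Gamma_PP b" and "1 \<le> a"
  shows "X * Y \<in> Gamma_split (a + b)" "Y * X \<in> Gamma_split (b + a)"
proof -
  let ?gens = "{Y1 * Y2 | Y1 Y2. \<exists>b1 b2. Y1 \<in> Gamma_P b1 \<and> Y2 \<in> Gamma_P b2 \<and> 1 \<le> b1 \<and> 1 \<le> b2 \<and> b1 + b2 = b}"
  have X': "X \<in> Gamma a" using Gamma_P_subset_Gamma[OF X] .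
  have gen: "X * s * 1\<^sub>m d \<in> mat_span d (split_words (a + b))"
    "1\<^sub>m d * s * X \<in> mat_span d (split_words (b + a))" if "s \<in> ?gens" for s
  proof -
    obtain Y1 Y2 b1 b2 where s: "s = Y1 * Y2" "Y1 \<in> Gamma_P b1" "Y2 \<in> Gamma_P b2" "1 \<le> b1" "1 \<le> b2"
      "b1 + b2 = b" using \<open>s \<in> ?gens\<close> by blast
    have "X * Y1 * Y2 \<in> Gamma_split (a + b1 + b2)"
      by (rule Gamma_sandwich_Gamma_P[OF X' s(2) Gamma_P_subset_Gamma[OF s(3)] \<open>1 \<le> a\<close> s(5)])
    moreover have "Y1 * Y2 * X \<in> Gamma_split (b1 + b2 + a)"
      by (rule Gamma_sandwich_Gamma_P[OF Gamma_P_subset_Gamma[OF s(2)] s(3) X' s(4) \<open>1 \<le> a\<close>])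
    ultimately show "X * s * 1\<^sub>m d \<in> mat_span d (split_words (a + b))"
      "1\<^sub>m d * s * X \<in> mat_span d (split_words (b + a))"
      using s Gamma_P_carrier X unfolding Gamma_split_def by (simp_all add: add.assoc)
  qed
  note Y' = Y[unfolded Gamma_PP_def]
  have "X * Y * 1\<^sub>m d \<in> Gamma_split (a + b)" "1\<^sub>m d * Y * X \<in> Gamma_split (b + a)"
    unfolding Gamma_split_def
    using mat_span_sandwich[OF Gamma_PP_generators_carrier Gamma_P_carrier[OF X] one_carrier_mat gen(1) Y']
      mat_span_sandwich[OF Gamma_PP_generators_carrier one_carrier_mat Gamma_P_carrier[OF X] gen(2) Y']
    by blast+
  then show "X * Y \<in> Gamma_split (a + b)" "Y * X \<in> Gamma_split (b + a)"
    using Gamma_P_carrier[OF X] Gamma_PP_carrier[OF Y] by simp_all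
qed

section \<open>The generators and the effective Hamiltonian modulo split words\<close>

text \<open>Each commutator with a generator \<open>S\<^sub>i \<in> Gamma_P i\<close> adds a factor containing \<open>P\<close>;
  once there are three such factors, a \<open>P\<close> sits strictly inside the word.\<close>

definition hatS_class :: "nat \<Rightarrow> nat \<Rightarrow> complex mat set" where
  "hatS_class k n = (if k = 0 then Gamma_P n else if k = 1 then Gamma_PP n else Gamma_split n)"

lemma mat_span_hatS_class [simp]: "mat_span d (hatS_class k n) = hatS_class k n"
  unfolding hatS_class_def Gamma_P_def Gamma_PP_def Gamma_split_def by (simp add: mat_span_span)

lemma hatS_class_carrier: "X \<in> hatS_class k n \<Longrightarrow> X \<in> Cd"
  unfolding hatS_class_def using Gamma_P_carrier Gamma_PP_carrier Gamma_split_carrier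
  by (auto split: if_splits)

lemma V_offdiag_in_Gamma_P: "Vod \<in> Gamma_P 1"
proof -
  have "P * (V * Q) \<in> Gamma_P 1"
    using Gamma_P_intros(1) Gamma_mult[OF V_in_Gamma_1 letters_in_Gamma_0(4)] by simp
  moreover have "(Q * V) * P \<in> Gamma_P 1"
    using Gamma_P_intros(2)[OF Gamma_mult[OF letters_in_Gamma_0(4) V_in_Gamma_1]] by simp
  ultimately show ?thesis unfolding V_offdiag_def using Gamma_P_closed(1) by simp
qed

lemma ad_in_hatS_class:
  assumes S: "S \<in> Gamma_P a" and X: "X \<in> hatS_class k b" and "1 \<le> a" "1 \<le> b"
  shows "ad S X \<in> hatS_class (Suc k) (a + b)"
proof -
  consider "k = 0" | "k = 1" | "2 \<le> k" by linarith
  then show ?thesis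
  proof cases
    case 1
    then have "S * X \<in> Gamma_PP (a + b)" "X * S \<in> Gamma_PP (a + b)"
      using X assms(3,4) by (auto simp: hatS_class_def intro: Gamma_PP_intro[OF S] Gamma_PP_intro[OF _ S])
    then show ?thesis using 1 by (simp add: ad_def hatS_class_def Gamma_PP_diff)
  next
    case 2
    then have "X \<in> Gamma_PP b" using X by (simp add: hatS_class_def)
    from Gamma_P_mult_Gamma_PP[OF S this \<open>1 \<le> a\<close>]
    have "S * X \<in> Gamma_split (a + b)" "X * S \<in> Gamma_split (a + b)" by (simp_all add: add.commute)
    then show ?thesis using 2 by (simp add: ad_def hatS_class_def Gamma_split_closed(3))
  next
    case 3
    then have "X \<in> Gamma_split b" using X by (simp add: hatS_class_def)
    then have "S * X \<in> Gamma_split (a + b)" "X * S \<in> Gamma_split (a + b)"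
      using Gamma_split_mult_left[OF Gamma_P_subset_Gamma[OF S], of X b "a + b"]
        Gamma_split_mult_right[OF _ Gamma_P_subset_Gamma[OF S], of X b "a + b"] by auto
    then show ?thesis using 3 by (simp add: ad_def hatS_class_def Gamma_split_closed(3))
  qed
qed

lemma hatS_in_class:
  assumes "\<And>i. 1 \<le> i \<Longrightarrow> i \<le> m \<Longrightarrow> S i \<in> Gamma_P i"
  shows "hatS d S Vod k m \<in> hatS_class k (Suc m)"
  using assms
proof (induction k arbitrary: m)
  case 0
  then show ?case
    using V_offdiag_in_Gamma_P by (auto simp: hatS_class_def Gamma_P_def mat_span_zero)
next
  case (Suc k)
  have "ad (S i) (hatS d S Vod k (m - i)) \<in> hatS_class (Suc k) (Suc m)" if "i \<in> set [1..<m + 1]" for i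
    using ad_in_hatS_class[OF Suc.prems Suc.IH[of "m - i"], of i] Suc.prems that by auto
  then have "msum d (\<lambda>i. ad (S i) (hatS d S Vod k (m - i))) [1..<m + 1]
      \<in> mat_span d (hatS_class (Suc k) (Suc m))"
    by (intro msum_in_mat_span) (simp only: mat_span_hatS_class)
  then show ?case by simp
qed

lemma VG_pow_Suc_simps [simp]:
  "(V * G) ^\<^sub>m Suc k * P = 0\<^sub>m d d" "(V * G) ^\<^sub>m Suc k * Q = (V * G) ^\<^sub>m Suc k"
  by (simp_all add: pow_mat.simps(2))

lemma GV_pow_Suc_simps [simp]:
  "P * (G * V) ^\<^sub>m Suc k = 0\<^sub>m d d" "Q * (G * V) ^\<^sub>m Suc k = (G * V) ^\<^sub>m Suc k"
  by (simp_all add: pow_mat_Suc_left[of "G * V"])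

lemma pow_Suc_simps_right [simp]:
  assumes "Z \<in> Cd"
  shows "(V * G) ^\<^sub>m Suc k * (P * Z) = 0\<^sub>m d d" "(V * G) ^\<^sub>m Suc k * (Q * Z) = (V * G) ^\<^sub>m Suc k * Z"
    "P * ((G * V) ^\<^sub>m Suc k * Z) = 0\<^sub>m d d" "Q * ((G * V) ^\<^sub>m Suc k * Z) = (G * V) ^\<^sub>m Suc k * Z"
  using assms by (simp_all flip: mat_assoc)

definition S_lead :: "nat \<Rightarrow> complex mat" where
  "S_lead n = P * (V * G) ^\<^sub>m n - (G * V) ^\<^sub>m n * P"

lemma S_lead_carrier [simp]: "S_lead n \<in> Cd"
  unfolding S_lead_def by simp

lemma S_lead_in_Gamma_P: "S_lead n \<in> Gamma_P n"
  unfolding S_lead_def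
  by (intro Gamma_P_closed(2) Gamma_P_intros VG_pow_in_Gamma GV_pow_in_Gamma)

lemma Gamma_P_of_mod_split:
  assumes "X \<in> Cd" "X - S_lead n \<in> Gamma_split n" shows "X \<in> Gamma_P n"
proof -
  have "X = S_lead n + (X - S_lead n)"
    using assms(1) carrier_matD[OF S_lead_carrier[of n]] by (intro eq_matI) auto
  then show ?thesis using Gamma_P_closed(1)[OF S_lead_in_Gamma_P Gamma_P_intros(3)[OF assms(2)]] by simp
qed

lemma SW_S_1: "SW_S H V 1 = S_lead 1"
  using SW_S_Suc[of H V 0] unfolding S_next_def Let_def Lop_def V_offdiag_def S_lead_def by simp

definition SW_bernoulli_sum :: "nat \<Rightarrow> complex mat" where
  "SW_bernoulli_sum k = msum d
     (\<lambda>j. complex_of_real (sw_a (2 * j)) \<cdot>\<^sub>m Lop P G (hatS d (SW_S H V) Vod (2 * j) (Suc k)))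
     [1..<Suc k div 2 + 1]"

lemma SW_S_Suc_Suc: "SW_S H V (Suc (Suc k)) = - Lop P G (ad Vd (SW_S H V (Suc k))) + SW_bernoulli_sum k"
  using SW_S_Suc[of H V "Suc k"] unfolding S_next_def Let_def SW_bernoulli_sum_def by simp

lemma Lop_Gamma_split: "X \<in> Gamma_split n \<Longrightarrow> Lop P G X \<in> Gamma_split n"
  unfolding Lop_def using Gamma_split_sandwich[OF letters_in_Gamma_0(2) _ letters_in_Gamma_0(3)]
    Gamma_split_sandwich[OF letters_in_Gamma_0(3) _ letters_in_Gamma_0(2)]
  by (intro Gamma_split_closed(3)) auto

lemma SW_bernoulli_sum_Gamma_split:
  assumes "\<And>i. 1 \<le> i \<Longrightarrow> i \<le> Suc k \<Longrightarrow> SW_S H V i \<in> Gamma_P i"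
  shows "SW_bernoulli_sum k \<in> Gamma_split (Suc (Suc k))"
  unfolding SW_bernoulli_sum_def Gamma_split_def
proof (rule msum_in_mat_span)
  fix j assume "j \<in> set [1..<Suc k div 2 + 1]"
  then have "1 \<le> j" by auto
  then have "hatS d (SW_S H V) Vod (2 * j) (Suc k) \<in> Gamma_split (Suc (Suc k))"
    using hatS_in_class[OF assms, of "Suc k" "2 * j"] by (simp add: hatS_class_def)
  then show "complex_of_real (sw_a (2 * j)) \<cdot>\<^sub>m Lop P G (hatS d (SW_S H V) Vod (2 * j) (Suc k))
      \<in> mat_span d (split_words (Suc (Suc k)))"
    using Lop_Gamma_split Gamma_split_closed(4) unfolding Gamma_split_def by blast
qed

lemma Lop_ad_V_diag_Gamma_split: "X \<in> Gamma_split n \<Longrightarrow> Lop P G (ad Vd X) \<in> Gamma_split (Suc n)"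
  unfolding ad_def
  using Gamma_split_mult_left[OF V_diag_in_Gamma_1] Gamma_split_mult_right[OF _ V_diag_in_Gamma_1]
  by (intro Lop_Gamma_split Gamma_split_closed(3)) auto

lemma Lop_ad_V_diag_diff:
  "A \<in> Cd \<Longrightarrow> B \<in> Cd \<Longrightarrow> Lop P G (ad Vd (A - B)) = Lop P G (ad Vd A) - Lop P G (ad Vd B)"
  unfolding Lop_def ad_def V_diag_def by simp (intro eq_matI, auto simp: algebra_simps)

text \<open>The \<open>P V P\<close> part of \<open>V\<^sub>d\<close> only produces split words, while its \<open>Q V Q\<close> part
  extends the leading term by one more factor \<open>V G\<close> (resp. \<open>G V\<close>).\<close>

lemma Lop_ad_V_diag_S_lead:
  "Lop P G (ad Vd (S_lead (Suc k))) + S_lead (Suc (Suc k)) \<in> Gamma_split (Suc (Suc k))"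
proof -
  define JX where "JX = P * (V * (P * ((V * G) ^\<^sub>m Suc k * G)))"
  define JY where "JY = G * ((G * V) ^\<^sub>m Suc k * (P * (V * P)))"
  have "(P * V) * P * ((V * G) ^\<^sub>m Suc k * G) \<in> Gamma_split (Suc (Suc k))"
    using Gamma_mult[OF letters_in_Gamma_0(2) V_in_Gamma_1]
      Gamma_mult_letters[OF VG_pow_in_Gamma mat_span_base[OF one_P_G_in_Z_letters(3)]]
    by (intro split_word_in_Gamma_split[of _ 1 _ "Suc k"]) auto
  then have JX: "JX \<in> Gamma_split (Suc (Suc k))" unfolding JX_def by simp
  have "(G * (G * V) ^\<^sub>m Suc k) * P * (V * P) \<in> Gamma_split (Suc (Suc k))"
    using Gamma_mult[OF letters_in_Gamma_0(3) GV_pow_in_Gamma] Gamma_mult[OF V_in_Gamma_1 letters_in_Gamma_0(2)]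
    by (intro split_word_in_Gamma_split[of _ "Suc k" _ 1]) auto
  then have JY: "JY \<in> Gamma_split (Suc (Suc k))" unfolding JY_def by simp
  have X: "Lop P G (ad Vd (P * (V * G) ^\<^sub>m Suc k)) = JX - P * (V * G) ^\<^sub>m Suc (Suc k)"
  proof -
    have "P * (V * G) ^\<^sub>m Suc (Suc k) = P * ((V * G) ^\<^sub>m Suc k * (V * G))"
      by (simp add: pow_mat.simps(2))
    then show ?thesis unfolding JX_def by (simp add: Lop_def ad_def V_diag_def)
  qed
  have Y: "Lop P G (ad Vd ((G * V) ^\<^sub>m Suc k * P)) = JY - (G * V) ^\<^sub>m Suc (Suc k) * P"
  proof -
    have "(G * V) ^\<^sub>m Suc (Suc k) * P = G * (V * ((G * V) ^\<^sub>m Suc k * P))"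
      by (simp add: pow_mat_Suc_left)
    then show ?thesis unfolding JY_def by (simp add: Lop_def ad_def V_diag_def, intro eq_matI, auto)
  qed
  have "Lop P G (ad Vd (S_lead (Suc k)))
      = Lop P G (ad Vd (P * (V * G) ^\<^sub>m Suc k)) - Lop P G (ad Vd ((G * V) ^\<^sub>m Suc k * P))"
    unfolding S_lead_def by (rule Lop_ad_V_diag_diff) simp_all
  then have "Lop P G (ad Vd (S_lead (Suc k))) + S_lead (Suc (Suc k)) = JX - JY"
    unfolding X Y S_lead_def
    using Gamma_split_carrier[OF JX] Gamma_split_carrier[OF JY] by (intro eq_matI) auto
  then show ?thesis using Gamma_split_closed(3)[OF JX JY] by simp
qed

lemma SW_S_mod_Gamma_split: "1 \<le> n \<Longrightarrow> SW_S H V n \<in> Cd \<and> SW_S H V n - S_lead n \<in> Gamma_split n"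
proof (induction n rule: less_induct)
  case (less n)
  consider "n = 1" | k where "n = Suc (Suc k)"
    using less.prems by (metis One_nat_def Suc_le_D not0_implies_Suc)
  then show ?case
  proof cases
    case 1
    then show ?thesis using SW_S_1 Gamma_split_closed(1) by simp
  next
    case 2
    define S where "S = SW_S H V (Suc k)"
    have S: "S \<in> Cd" "S - S_lead (Suc k) \<in> Gamma_split (Suc k)"
      using less.IH[of "Suc k"] 2 unfolding S_def by auto
    have S_Gamma_P: "SW_S H V i \<in> Gamma_P i" if "1 \<le> i" "i \<le> Suc k" for i
      using less.IH[of i] that 2 Gamma_P_of_mod_split by auto
    define B where "B = SW_bernoulli_sum k"
    have B: "B \<in> Gamma_split n" using SW_bernoulli_sum_Gamma_split[OF S_Gamma_P] 2 unfolding B_def by simp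
    define LS where "LS = Lop P G (ad Vd S)"
    define LL where "LL = Lop P G (ad Vd (S_lead (Suc k)))"
    have LS_LL: "LS \<in> Cd" "LL \<in> Cd"
      unfolding LS_def LL_def Lop_def ad_def V_diag_def using S(1) by simp_all
    have "LS - LL \<in> Gamma_split n"
      using Lop_ad_V_diag_Gamma_split[OF S(2)] Lop_ad_V_diag_diff[OF S(1) S_lead_carrier] 2
      unfolding LS_def LL_def by simp
    moreover have "SW_S H V n = - LS + B"
      unfolding 2 SW_S_Suc_Suc S_def[symmetric] B_def[symmetric] LS_def ..
    moreover have "- LS + B - S_lead n = B - (LS - LL) - (LL + S_lead (Suc (Suc k)))"
      using LS_LL Gamma_split_carrier[OF B] carrier_matD[OF S_lead_carrier] 2 by (intro eq_matI) auto
    ultimately show ?thesis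
      using B LS_LL(1) Gamma_split_carrier[OF B] Lop_ad_V_diag_S_lead[of k] 2
      unfolding LL_def by (auto intro: Gamma_split_closed(3))
  qed
qed

lemma SW_S_in_Gamma_P: "1 \<le> n \<Longrightarrow> SW_S H V n \<in> Gamma_P n"
  using SW_S_mod_Gamma_split Gamma_P_of_mod_split by blast

lemma hatS_one:
  assumes "1 \<le> m" "\<And>i. 1 \<le> i \<Longrightarrow> i \<le> m \<Longrightarrow> S i \<in> Cd" "W \<in> Cd"
  shows "hatS d S W 1 m = ad (S m) W"
proof -
  have vanish: "foldr (\<lambda>i acc. ad (S i) (hatS d S W 0 (m - i)) + acc) xs Z = Z"
    if "set xs \<subseteq> {1..<m}" "Z \<in> Cd" for xs Z
    using that by (induction xs) (auto simp: ad_def assms(2))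
  have "[1..<m + 1] = [1..<m] @ [m]" using assms(1) by simp
  moreover have "ad (S m) W \<in> Cd" using assms by (simp add: ad_def)
  ultimately show ?thesis
    unfolding One_nat_def hatS.simps msum_def using vanish[of "[1..<m]"] by simp
qed

lemma V_GV_pow: "V * (G * V) ^\<^sub>m n = (V * G) ^\<^sub>m n * V"
proof (induction n)
  case (Suc n)
  have "V * (G * V) ^\<^sub>m Suc n = (V * (G * V) ^\<^sub>m n) * (G * V)" by (simp add: pow_mat.simps(2))
  also have "\<dots> = (V * G) ^\<^sub>m Suc n * V" unfolding Suc by (simp add: pow_mat.simps(2))
  finally show ?case .
qed simp

definition chain_lead :: "nat \<Rightarrow> complex mat" where
  "chain_lead m = P * (V * G) ^\<^sub>m m * V * P"

lemma chain_lead_carrier [simp]: "chain_lead m \<in> Cd"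
  unfolding chain_lead_def by simp

lemma P_ad_V_offdiag_S_lead: "P * ad (S_lead (Suc k)) Vod * P = chain_lead (Suc k) + chain_lead (Suc k)"
proof -
  have V_GV: "V * ((G * V) ^\<^sub>m n * Z) = (V * G) ^\<^sub>m n * (V * Z)" if "Z \<in> Cd" for n Z
    using that V_GV_pow[of n] by (simp flip: mat_assoc)
  show ?thesis
    unfolding S_lead_def chain_lead_def ad_def V_offdiag_def by (simp add: V_GV, intro eq_matI, auto)
qed

lemma P_ad_V_offdiag_diff:
  "A \<in> Cd \<Longrightarrow> B \<in> Cd \<Longrightarrow> P * ad (A - B) Vod * P = P * ad A Vod * P - P * ad B Vod * P"
  unfolding ad_def V_offdiag_def by simp (intro eq_matI, auto simp: algebra_simps)

lemma P_ad_V_offdiag_Gamma_split: "X \<in> Gamma_split n \<Longrightarrow> P * ad X Vod * P \<in> Gamma_split (Suc n)"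
proof -
  assume X: "X \<in> Gamma_split n"
  have Vod: "Vod \<in> Gamma 1" using Gamma_P_subset_Gamma[OF V_offdiag_in_Gamma_P] .
  have "ad X Vod \<in> Gamma_split (Suc n)"
    unfolding ad_def using Gamma_split_mult_right[OF X Vod] Gamma_split_mult_left[OF Vod X]
    by (intro Gamma_split_closed(3)) auto
  then show ?thesis using Gamma_split_sandwich[OF letters_in_Gamma_0(2) _ letters_in_Gamma_0(2)] by simp
qed

definition H_eff_summand :: "nat \<Rightarrow> nat \<Rightarrow> complex mat" where
  "H_eff_summand q j = complex_of_real (sw_b j) \<cdot>\<^sub>m (P * hatS d (SW_S H V) Vod (2 * j - 1) (q - 1) * P)"

lemma H_eff_eq_msum: "q \<noteq> 1 \<Longrightarrow> H_eff H V q = msum d (H_eff_summand q) [1..<q div 2 + 1]"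
  unfolding H_eff_def H_eff_summand_def by simp

lemma H_eff_summand_carrier: "2 \<le> q \<Longrightarrow> H_eff_summand q j \<in> Cd"
  unfolding H_eff_summand_def
  using hatS_class_carrier[OF hatS_in_class[OF SW_S_in_Gamma_P]] by simp

lemma H_eff_summand_Gamma_split:
  assumes "2 \<le> q" "2 \<le> j" shows "H_eff_summand q j \<in> Gamma_split q"
proof -
  have "2 * j - 1 \<noteq> 0" "2 * j - 1 \<noteq> 1" using assms(2) by arith+
  then have "hatS d (SW_S H V) Vod (2 * j - 1) (q - 1) \<in> Gamma_split q"
    using hatS_in_class[OF SW_S_in_Gamma_P, of "q - 1" "2 * j - 1"] assms(1)
    by (simp add: hatS_class_def)
  then show ?thesis
    unfolding H_eff_summand_def
    using Gamma_split_sandwich[OF letters_in_Gamma_0(2) _ letters_in_Gamma_0(2)] Gamma_split_closed(4)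
    by simp
qed

lemma H_eff_summand_1:
  assumes "2 \<le> q"
  shows "H_eff_summand q 1 = complex_of_real (1 / 2) \<cdot>\<^sub>m (P * ad (SW_S H V (q - 1)) Vod * P)"
proof -
  have "hatS d (SW_S H V) Vod 1 (q - 1) = ad (SW_S H V (q - 1)) Vod"
    by (rule hatS_one) (use assms Gamma_P_carrier[OF SW_S_in_Gamma_P] in auto)
  then show ?thesis unfolding H_eff_summand_def sw_b_1 by simp
qed

lemma H_eff_mod_Gamma_split:
  assumes q: "2 \<le> q"
  shows "H_eff H V q \<in> Cd \<and> H_eff H V q - chain_lead (q - 1) \<in> Gamma_split q"
proof -
  obtain k where k: "q - 1 = Suc k" using q by (intro that[of "q - 2"]) arith
  define T where "T = msum d (H_eff_summand q) [2..<q div 2 + 1]"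
  have T: "T \<in> Gamma_split q"
    unfolding T_def Gamma_split_def
    by (rule msum_in_mat_span) (use H_eff_summand_Gamma_split[OF q] in \<open>auto simp: Gamma_split_def\<close>)
  have up: "[1..<q div 2 + 1] = 1 # [2..<q div 2 + 1]"
    by (subst upt_rec) (use q in \<open>auto simp: numeral_2_eq_2 div_greater_zero_iff\<close>)
  have "H_eff H V q = msum d (H_eff_summand q) [1..<q div 2 + 1]"
    using q by (simp add: H_eff_eq_msum)
  also have "\<dots> = H_eff_summand q 1 + T"
    unfolding up T_def msum_def by (simp only: foldr_Cons comp_apply)
  finally have H: "H_eff H V q = H_eff_summand q 1 + T" .
  define R where "R = SW_S H V (q - 1) - S_lead (q - 1)"
  have R: "R \<in> Gamma_split (q - 1)" "SW_S H V (q - 1) \<in> Cd"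
    using SW_S_mod_Gamma_split[of "q - 1"] q unfolding R_def by auto
  define F where "F = P * ad R Vod * P"
  have F: "F \<in> Gamma_split q" using P_ad_V_offdiag_Gamma_split[OF R(1)] q unfolding F_def by simp
  have "F = P * ad (SW_S H V (q - 1)) Vod * P - (chain_lead (q - 1) + chain_lead (q - 1))"
    unfolding F_def R_def k P_ad_V_offdiag_diff[OF R(2)[unfolded k] S_lead_carrier] P_ad_V_offdiag_S_lead ..
  then have "P * ad (SW_S H V (q - 1)) Vod * P = chain_lead (q - 1) + chain_lead (q - 1) + F"
    using R(2) carrier_matD[OF chain_lead_carrier] by (intro eq_matI) (auto simp: ad_def)
  then have "H_eff H V q - chain_lead (q - 1) = complex_of_real (1 / 2) \<cdot>\<^sub>m F + T"
    unfolding H H_eff_summand_1[OF q]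
    using Gamma_split_carrier[OF F] Gamma_split_carrier[OF T] carrier_matD[OF chain_lead_carrier]
    by (intro eq_matI) (auto simp: algebra_simps)
  moreover have "H_eff H V q \<in> Cd" unfolding H using H_eff_summand_carrier[OF q] Gamma_split_carrier[OF T] by simp
  ultimately show ?thesis using F T by (auto intro: Gamma_split_closed)
qed

lemma P_H_eff_P:
  assumes q: "2 \<le> q" shows "P * H_eff H V q * P = H_eff H V q"
proof -
  have "P * msum d (H_eff_summand q) xs * P = msum d (\<lambda>j. P * H_eff_summand q j * P) xs" for xs
    by (rule msum_sandwich) (simp_all add: H_eff_summand_carrier[OF q])
  also have "\<dots> xs = msum d (H_eff_summand q) xs" for xs
    by (rule msum_cong)
       (simp add: H_eff_summand_def hatS_class_carrier[OF hatS_in_class[OF SW_S_in_Gamma_P]])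
  finally have "P * msum d (H_eff_summand q) xs * P = msum d (H_eff_summand q) xs" for xs .
  moreover have "H_eff H V q = msum d (H_eff_summand q) [1..<q div 2 + 1]"
    using q by (simp add: H_eff_eq_msum)
  ultimately show ?thesis by simp
qed

section \<open>Split words between two ground-state projectors\<close>

definition P_word :: "complex mat list \<Rightarrow> complex mat" where
  "P_word Zs = foldl (\<lambda>acc Z. acc * Z * V) (P * V) Zs"

lemma V_chain_eq_P_word: "V_chain P V Zs = P_word Zs * P"
  unfolding V_chain_def P_word_def ..

lemma P_word_carrier: "set Zs \<subseteq> Cd \<Longrightarrow> P_word Zs \<in> Cd"
  by (induction Zs rule: rev_induct) (simp_all add: P_word_def del: mat_assoc)

definition P_words_of_length :: "nat \<Rightarrow> complex mat set" where
  "P_words_of_length a = {P_word Zs | Zs. length Zs = a \<and> set Zs \<subseteq> Z_letters}"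

lemma P_words_of_length_carrier: "P_words_of_length a \<subseteq> Cd"
  unfolding P_words_of_length_def using P_word_carrier Z_letters_carrier by blast

lemma P_words_of_length_snoc:
  assumes w: "w \<in> P_words_of_length a" and Z: "Z \<in> Z_letters"
  shows "w * Z * V \<in> P_words_of_length (Suc a)"
proof -
  obtain Zs where Zs: "w = P_word Zs" "length Zs = a" "set Zs \<subseteq> Z_letters"
    using w unfolding P_words_of_length_def by auto
  have "w * Z * V = P_word (Zs @ [Z])" unfolding Zs(1) P_word_def by simp
  moreover have "P_word (Zs @ [Z]) \<in> P_words_of_length (Suc a)"
    unfolding P_words_of_length_def using Zs Z by (intro CollectI exI[of _ "Zs @ [Z]"]) auto
  ultimately show ?thesis by simp
qed

lemma P_Gamma_V_in_span_P_words: "A \<in> Gamma a \<Longrightarrow> P * A * V \<in> mat_span d (P_words_of_length a)"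
proof (induction a arbitrary: A)
  case 0
  have "P * s * V \<in> mat_span d (P_words_of_length 0)" if "s \<in> Z_letters" for s
  proof -
    have word: "P * V \<in> mat_span d (P_words_of_length 0)"
      using mat_span_base[of "P_word []"] unfolding P_words_of_length_def P_word_def by auto
    from that consider "s = P" | m where "s = G ^\<^sub>m m" unfolding Z_letters_def by auto
    then show ?thesis
    proof cases
      case 2
      then show ?thesis using word by (cases m) (simp_all add: mat_span_zero)
    qed (use word in simp)
  qed
  moreover have "A \<in> mat_span d Z_letters" using 0 by (simp add: Gamma.simps)
  ultimately show ?case by (rule mat_span_sandwich[OF Z_letters_carrier P_carrier V_carrier])
next
  case (Suc a)
  have "P * s * V \<in> mat_span d (P_words_of_length (Suc a))"
    if s_gen: "s \<in> {A * V * Z | A Z. A \<in> Gamma a \<and> Z \<in> Z_letters}" for s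
  proof -
    obtain A' Z where s: "s = A' * V * Z" "A' \<in> Gamma a" "Z \<in> Z_letters" using s_gen by auto
    have Z: "Z * V \<in> Cd" using s(3) Z_letters_carrier by auto
    have "w * (Z * V) \<in> mat_span d (P_words_of_length (Suc a))" if w: "w \<in> P_words_of_length a" for w
    proof -
      have "w \<in> Cd" "Z \<in> Cd" using w s(3) P_words_of_length_carrier Z_letters_carrier by auto
      then show ?thesis using mat_span_base[OF P_words_of_length_snoc[OF w s(3)]] by simp
    qed
    then have "(P * A' * V) * (Z * V) \<in> mat_span d (P_words_of_length (Suc a))"
      by (rule mat_span_mult_right[OF P_words_of_length_carrier Z _ Suc.IH[OF s(2)]])
    then show ?thesis using s Gamma_carrier Z_letters_carrier by auto
  qed
  moreover have "A \<in> mat_span d {A * V * Z | A Z. A \<in> Gamma a \<and> Z \<in> Z_letters}"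
    using Suc.prems by (simp add: Gamma.simps)
  ultimately show ?case by (rule mat_span_sandwich[OF Gamma_Suc_generators_carrier P_carrier V_carrier])
qed

end

locale sw_truncation = sw_setting +
  fixes L :: nat
  assumes chains_in_span: "\<forall>n. 1 \<le> n \<and> n < L \<longrightarrow> (\<forall>Zs. length Zs = n - 1 \<and> set Zs \<subseteq> Z_choices H \<longrightarrow>
            in_span_P P (V_chain P V Zs))"
begin

lemma P_Gamma_V_P_in_span:
  assumes A: "A \<in> Gamma a" and "Suc a < L" shows "P * A * V * P \<in> mat_span d {P}"
proof (rule mat_span_mult_right[OF P_words_of_length_carrier P_carrier _ P_Gamma_V_in_span_P_words[OF A]])
  fix w assume "w \<in> P_words_of_length a"
  then obtain Zs where Zs: "w = P_word Zs" "length Zs = a" "set Zs \<subseteq> Z_letters"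
    unfolding P_words_of_length_def by auto
  then have "in_span_P P (V_chain P V Zs)"
    using chains_in_span[rule_format, of "Suc a" Zs] \<open>Suc a < L\<close> Z_letters_subset_Z_choices by auto
  then obtain c where "w * P = c \<cdot>\<^sub>m P"
    unfolding in_span_P_def V_chain_eq_P_word Zs(1) by blast
  then show "w * P \<in> mat_span d {P}" by (auto intro: mat_span_smult mat_span_base)
qed

lemma P_Gamma_P_in_span:
  assumes A: "A \<in> Gamma a" and "1 \<le> a" "a < L" shows "P * A * P \<in> mat_span d {P}"
proof -
  obtain a' where a: "a = Suc a'" using \<open>1 \<le> a\<close> by (cases a) auto
  have "P * s * P \<in> mat_span d {P}" if s_gen: "s \<in> {A * V * Z | A Z. A \<in> Gamma a' \<and> Z \<in> Z_letters}" for s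
  proof -
    obtain A' Z where s: "s = A' * V * Z" "A' \<in> Gamma a'" "Z \<in> Z_letters" using s_gen by auto
    have PAVP: "P * A' * V * P \<in> mat_span d {P}"
      using P_Gamma_V_P_in_span[OF s(2)] \<open>a < L\<close> a by simp
    from s(3) consider "Z = P" | m where "Z = G ^\<^sub>m m" unfolding Z_letters_def by auto
    then show ?thesis
    proof cases
      case 2
      then show ?thesis
        using PAVP s Gamma_carrier by (cases m) (simp_all add: mat_span_zero)
    qed (use PAVP s Gamma_carrier in simp)
  qed
  moreover have "A \<in> mat_span d {A * V * Z | A Z. A \<in> Gamma a' \<and> Z \<in> Z_letters}"
    using A a by (simp add: Gamma.simps)
  ultimately show ?thesis by (rule mat_span_sandwich[OF Gamma_Suc_generators_carrier P_carrier P_carrier])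
qed

lemma P_Gamma_split_P_in_span:
  assumes X: "X \<in> Gamma_split n" and "n \<le> L" shows "P * X * P \<in> mat_span d {P}"
proof (rule mat_span_sandwich[OF split_words_carrier P_carrier P_carrier _ X[unfolded Gamma_split_def]])
  fix s assume "s \<in> split_words n"
  then obtain A B a b where s: "s = A * P * B" "A \<in> Gamma a" "B \<in> Gamma b" "1 \<le> a" "1 \<le> b" "a + b = n"
    unfolding split_words_def by auto
  have "(P * A * P) * (P * B * P) \<in> mat_span d {P}"
    by (rule mat_span_mult[of "{P}" d "{P}"], simp_all add: mat_span_base)
       (use P_Gamma_P_in_span[OF s(2) s(4)] P_Gamma_P_in_span[OF s(3) s(5)] s(4-6) \<open>n \<le> L\<close> in auto)
  then show "P * s * P \<in> mat_span d {P}" using s Gamma_carrier by simp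
qed

lemma in_span_P_if_mat_span: "X \<in> mat_span d {P} \<Longrightarrow> in_span_P P X"
  unfolding in_span_P_def by (rule mat_span_singleton[OF P_carrier])

lemma H_eff_1_in_span: "2 \<le> L \<Longrightarrow> in_span_P P (H_eff H V 1)"
  using P_Gamma_V_P_in_span[OF letters_in_Gamma_0(1)]
  by (intro in_span_P_if_mat_span) (simp add: H_eff_def)

lemma H_eff_mod_span:
  assumes "2 \<le> q" "q \<le> L" shows "\<exists>c. H_eff H V q = chain_lead (q - 1) + c \<cdot>\<^sub>m P"
proof -
  define X where "X = H_eff H V q - chain_lead (q - 1)"
  have H: "H_eff H V q \<in> Cd" "X \<in> Gamma_split q"
    using H_eff_mod_Gamma_split[OF assms(1)] unfolding X_def by auto
  have "P * X * P = X"
    unfolding X_def using P_H_eff_P[OF assms(1)] H(1) by (simp add: chain_lead_def)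
  then obtain c where "X = c \<cdot>\<^sub>m P"
    using P_Gamma_split_P_in_span[OF H(2) assms(2)] in_span_P_if_mat_span unfolding in_span_P_def by metis
  moreover have "H_eff H V q = chain_lead (q - 1) + X"
    unfolding X_def using H(1) carrier_matD[OF chain_lead_carrier] by (intro eq_matI) auto
  ultimately show ?thesis by blast
qed

lemma H_eff_in_span:
  assumes "2 \<le> q" "q < L" shows "in_span_P P (H_eff H V q)"
proof -
  obtain c where c: "H_eff H V q = chain_lead (q - 1) + c \<cdot>\<^sub>m P"
    using H_eff_mod_span assms by fastforce
  obtain e where "chain_lead (q - 1) = e \<cdot>\<^sub>m P"
    using P_Gamma_V_P_in_span[OF VG_pow_in_Gamma, of "q - 1"] assms in_span_P_if_mat_span
    unfolding in_span_P_def chain_lead_def by fastforce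
  then have "H_eff H V q = (e + c) \<cdot>\<^sub>m P" unfolding c by (intro eq_matI) (auto simp: algebra_simps)
  then show ?thesis unfolding in_span_P_def ..
qed

end

theorem theorem2:
  fixes H0 V :: "complex mat" and d L :: nat
  assumes "H0 \<in> carrier_mat d d" and "V \<in> carrier_mat d d"
    and "hermitian_mat H0" and "hermitian_mat V"
    and "L \<ge> 2"
    and "\<forall>n. 1 \<le> n \<and> n < L \<longrightarrow> (\<forall>Zs. length Zs = n - 1 \<and> set Zs \<subseteq> Z_choices H0 \<longrightarrow>
            in_span_P (ground_proj H0) (V_chain (ground_proj H0) V Zs))"
  shows "H_eff H0 V 1 = ground_proj H0 * V * ground_proj H0
    \<and> in_span_P (ground_proj H0) (H_eff H0 V 1)
    \<and> (\<forall>q. 2 \<le> q \<and> q < L \<longrightarrow> in_span_P (ground_proj H0) (H_eff H0 V q))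
    \<and> (\<exists>c. H_eff H0 V L = ground_proj H0 * ((V * reduced_resolvent H0) ^\<^sub>m (L - 1)) * V * ground_proj H0
              + c \<cdot>\<^sub>m ground_proj H0)"
proof -
  interpret sw_truncation H0 V d L
    using assms(1,2,6) ground_proj_reduced_resolvent[OF assms(1,3)] by unfold_locales auto
  have "\<exists>c. H_eff H0 V L = chain_lead (L - 1) + c \<cdot>\<^sub>m P"
    using H_eff_mod_span assms(5) by simp
  then show ?thesis
    using H_eff_1_in_span H_eff_in_span assms(5) unfolding chain_lead_def by (auto simp: H_eff_def)
qed

end
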